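(* Let $(\Omega(\mathcal{A}),d)$ be a differential calculus on a complex algebra $\mathcal{A}$, with $\mathcal{E}=\Omega^1(\mathcal{A})$ a finitely generated projective right $\mathcal{A}$-module, such that: (1) $\mathcal{E}=\mathcal{Z}(\mathcal{E})\otimes_{\mathcal{Z}(\mathcal{A})}\mathcal{A}$ (via the multiplication map); (2) $\mathcal{E}\otimes_{\mathcal{A}}\mathcal{E}=\ker(\wedge)\oplus\mathcal{F}$ where $\mathcal{F}$ is a right $\mathcal{A}$-submodule and $Q=\wedge|_{\mathcal{F}}:\mathcal{F}\to\Omega^2(\mathcal{A})$ is a right $\mathcal{A}$-linear isomorphism; (3) the map $\sigma=2P_{\rm sym}-1$ satisfies $\sigma(\omega\otimes_{\mathcal{A}}\eta)=\eta\otimes_{\mathcal{A}}\omega$ for all $\omega,\eta\in\mathcal{Z}(\mathcal{E})$. If $g$ is a pseudo-Riemannian bilinear metric on $\mathcal{E}$, then there exists a unique connection on $\mathcal{E}$ which is torsionless and compatible with $g$ on $\mathcal{Z}(\mathcal{E})$.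
   Context: A differential calculus: $\Omega(\mathcal{A})=\oplus_{j\ge0}\Omega^j(\mathcal{A})$, $\Omega^0=\mathcal{A}$, bimodules $\Omega^j$, an $\mathcal{A}$-bimodule product $\wedge$ with $\wedge(\Omega^j\otimes_{\mathcal{A}}\Omega^k)\subseteq\Omega^{j+k}$, $d:\Omega^j\to\Omega^{j+1}$ with $d^2=0$ and $d(\omega\wedge\eta)=d\omega\wedge\eta+(-1)^{\deg\omega}\omega\wedge d\eta$, and $\Omega^j$ the right span of $da_0\wedge\cdots\wedge da_{j-1}$. $\wedge:\mathcal{E}\otimes_{\mathcal{A}}\mathcal{E}\to\Omega^2(\mathcal{A})$ is the induced product. $P_{\rm sym}$ is the idempotent on $\mathcal{E}\otimes_{\mathcal{A}}\mathcal{E}$ with image $\ker\wedge$ and kernel $\mathcal{F}$. For a bimodule $\mathcal{M}$, $\mathcal{Z}(\mathcal{M})=\{m:am=ma\ \forall a\in\mathcal{A}\}$, and $\mathcal{Z}(\mathcal{A})$ is the center of $\mathcal{A}$. A connection is a $\mathbb{C}$-linear $\nabla:\mathcal{E}\to\mathcal{E}\otimes_{\mathcal{A}}\mathcal{E}$ with $\nabla(\omega a)=\nabla(\omega)a+\omega\otimes_{\mathcal{A}}da$; torsionless means $\wedge\circ\nabla+d=0$. A pseudo-Riemannian bilinear metric is an $\mathcal{A}$-bimodule map $g:\mathcal{E}\otimes_{\mathcal{A}}\mathcal{E}\to\mathcal{A}$ with $g\circ\sigma=g$ such that $e\mapsto g(e\otimes_{\mathcal{A}}-)$ is a right module isomorphism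 $\mathcal{E}\to\mathrm{Hom}_{\mathcal{A}}(\mathcal{E},\mathcal{A})$. $\nabla$ is compatible with $g$ on $\mathcal{Z}(\mathcal{E})$ if for all $\omega,\eta\in\mathcal{Z}(\mathcal{E})$: $(g\otimes_{\mathcal{A}}\mathrm{id})\{\sigma_{23}(\nabla(\omega)\otimes_{\mathcal{A}}\eta)+\omega\otimes_{\mathcal{A}}\nabla(\eta)\}=d(g(\omega\otimes_{\mathcal{A}}\eta))$, with $\sigma_{23}=\mathrm{id}\otimes_{\mathcal{A}}\sigma$ on $\mathcal{E}^{\otimes_{\mathcal{A}}3}$ and $(g\otimes_{\mathcal{A}}\mathrm{id})(x\otimes y\otimes z)=g(x\otimes_{\mathcal{A}}y)z$. *)

theory Defs
  imports Complex_Main "HOL-Library.Poly_Mapping"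
begin

definition zmult :: "int \<Rightarrow> 'g::ab_group_add \<Rightarrow> 'g" where
  "zmult k x = (if 0 \<le> k then (\<Sum>i<nat k. x) else - (\<Sum>i<nat (-k). x))"

definition addhom :: "('m::ab_group_add \<Rightarrow> 'p::ab_group_add) \<Rightarrow> bool" where
  "addhom f \<longleftrightarrow> (\<forall>x y. f (x + y) = f x + f y)"

section \<open>Balanced tensor products, defined as quotients of free abelian groups\<close>

text \<open>Free abelian group on pairs m, n: finitely supported integer functions on pairs.
 The canonical extension of a map on pairs to the free abelian group.\<close>

definition lift2 :: "('m \<Rightarrow> 'n \<Rightarrow> 'p::ab_group_add) \<Rightarrow> (('m \<times> 'n) \<Rightarrow>\<^sub>0 int) \<Rightarrow> 'p" where
  "lift2 t x = (\<Sum>p\<in>Poly_Mapping.keys x. zmult (Poly_Mapping.lookup x p) (t (fst p) (snd p)))"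

text \<open>The subgroup of relations defining the balanced tensor product
  M \<otimes>_S N, where M is a right S-module and N a left S-module
  (M, N, S given as subsets of ambient types).\<close>

inductive_set tensor_rel ::
  "'m::ab_group_add set \<Rightarrow> 'n::ab_group_add set \<Rightarrow> 's set \<Rightarrow> ('m \<Rightarrow> 's \<Rightarrow> 'm) \<Rightarrow> ('s \<Rightarrow> 'n \<Rightarrow> 'n)
     \<Rightarrow> (('m \<times> 'n) \<Rightarrow>\<^sub>0 int) set"
  for M N S rmul lmul where
  rel_addl: "m \<in> M \<Longrightarrow> m' \<in> M \<Longrightarrow> n \<in> N \<Longrightarrow>
     Poly_Mapping.single (m + m', n) 1 - Poly_Mapping.single (m, n) 1 - Poly_Mapping.single (m', n) 1
       \<in> tensor_rel M N S rmul lmul"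
| rel_addr: "m \<in> M \<Longrightarrow> n \<in> N \<Longrightarrow> n' \<in> N \<Longrightarrow>
     Poly_Mapping.single (m, n + n') 1 - Poly_Mapping.single (m, n) 1 - Poly_Mapping.single (m, n') 1
       \<in> tensor_rel M N S rmul lmul"
| rel_bal: "m \<in> M \<Longrightarrow> n \<in> N \<Longrightarrow> a \<in> S \<Longrightarrow>
     Poly_Mapping.single (rmul m a, n) 1 - Poly_Mapping.single (m, lmul a n) 1 \<in> tensor_rel M N S rmul lmul"
| rel_zero: "0 \<in> tensor_rel M N S rmul lmul"
| rel_diff: "x \<in> tensor_rel M N S rmul lmul \<Longrightarrow> y \<in> tensor_rel M N S rmul lmul \<Longrightarrow>
     x - y \<in> tensor_rel M N S rmul lmul"

text \<open>The map t exhibits the abelian group 'p as M \<otimes>_S N, i.e. the canonical map from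
  the free abelian group on M \<times> N to 'p is surjective with kernel exactly the relation subgroup
  (so 'p is isomorphic to F(M \<times> N)/R, with m \<otimes> n = t m n).\<close>

definition is_tensor ::
  "'m::ab_group_add set \<Rightarrow> 'n::ab_group_add set \<Rightarrow> 's set \<Rightarrow> ('m \<Rightarrow> 's \<Rightarrow> 'm) \<Rightarrow> ('s \<Rightarrow> 'n \<Rightarrow> 'n)
     \<Rightarrow> ('m \<Rightarrow> 'n \<Rightarrow> 'p::ab_group_add) \<Rightarrow> bool" where
  "is_tensor M N S rmul lmul t \<longleftrightarrow>
     (\<forall>\<tau>. \<exists>x. Poly_Mapping.keys x \<subseteq> M \<times> N \<and> lift2 t x = \<tau>) \<and>
     (\<forall>x. Poly_Mapping.keys x \<subseteq> M \<times> N \<longrightarrow> (lift2 t x = 0 \<longleftrightarrow> x \<in> tensor_rel M N S rmul lmul))"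

text \<open>The addhom map out of a tensor product induced by a balanced biaddhom map f
  (determined by m \<otimes> n \<mapsto> f m n; well-defined whenever f is balanced biaddhom).\<close>

definition tmap :: "('m \<Rightarrow> 'n \<Rightarrow> 't::ab_group_add) \<Rightarrow> ('m \<Rightarrow> 'n \<Rightarrow> 'p::ab_group_add) \<Rightarrow> 't \<Rightarrow> 'p" where
  "tmap t f \<tau> = lift2 f (SOME x. lift2 t x = \<tau>)"

definition left_module :: "('a::ring_1 \<Rightarrow> 'm::ab_group_add \<Rightarrow> 'm) \<Rightarrow> bool" where
  "left_module l \<longleftrightarrow> (\<forall>a b x y. l (a + b) x = l a x + l b x \<and> l a (x + y) = l a x + l a y \<and>
      l (a * b) x = l a (l b x) \<and> l 1 x = x)"

definition right_module :: "('m::ab_group_add \<Rightarrow> 'a::ring_1 \<Rightarrow> 'm) \<Rightarrow> bool" where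
  "right_module r \<longleftrightarrow> (\<forall>a b x y. r x (a + b) = r x a + r x b \<and> r (x + y) a = r x a + r y a \<and>
      r x (a * b) = r (r x a) b \<and> r x 1 = x)"

text \<open>A bimodule over the complex algebra A (the complex structure of A is given by a
  central ring homomorphism iota from the complex numbers); the complex numbers act
  the same way from both sides.\<close>

definition bimodule :: "(complex \<Rightarrow> 'a::ring_1) \<Rightarrow> ('a \<Rightarrow> 'm::ab_group_add \<Rightarrow> 'm) \<Rightarrow> ('m \<Rightarrow> 'a \<Rightarrow> 'm) \<Rightarrow> bool" where
  "bimodule \<iota> l r \<longleftrightarrow> left_module l \<and> right_module r \<and>
     (\<forall>a b x. l a (r x b) = r (l a x) b) \<and> (\<forall>c x. l (\<iota> c) x = r x (\<iota> c))"

definition complex_algebra :: "(complex \<Rightarrow> 'a::ring_1) \<Rightarrow> bool" where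
  "complex_algebra \<iota> \<longleftrightarrow> (\<forall>c d. \<iota> (c + d) = \<iota> c + \<iota> d \<and> \<iota> (c * d) = \<iota> c * \<iota> d) \<and> \<iota> 1 = 1 \<and>
     (\<forall>c a. \<iota> c * a = a * \<iota> c)"

definition bcenter :: "('a \<Rightarrow> 'm \<Rightarrow> 'm) \<Rightarrow> ('m \<Rightarrow> 'a \<Rightarrow> 'm) \<Rightarrow> 'm set" where
  "bcenter l r = {m. \<forall>a. l a m = r m a}"

definition acenter :: "'a::ring_1 set" where
  "acenter = {z. \<forall>a. z * a = a * z}"

text \<open>Finitely generated projective right module: a direct summand of a free module A^n.\<close>

definition fg_projective_right :: "('m::ab_group_add \<Rightarrow> 'a::ring_1 \<Rightarrow> 'm) \<Rightarrow> bool" where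
  "fg_projective_right r \<longleftrightarrow> (\<exists>(n::nat) (i :: 'm \<Rightarrow> nat \<Rightarrow> 'a) (p :: (nat \<Rightarrow> 'a) \<Rightarrow> 'm).
      (\<forall>x k. n \<le> k \<longrightarrow> i x k = 0) \<and>
      (\<forall>x y. i (x + y) = (\<lambda>k. i x k + i y k)) \<and> (\<forall>x a. i (r x a) = (\<lambda>k. i x k * a)) \<and>
      (\<forall>v w. p (\<lambda>k. v k + w k) = p v + p w) \<and> (\<forall>v a. p (\<lambda>k. v k * a) = r (p v) a) \<and>
      (\<forall>x. p (i x) = x))"

definition right_dual :: "('m::ab_group_add \<Rightarrow> 'a::ring_1 \<Rightarrow> 'm) \<Rightarrow> ('m \<Rightarrow> 'a) set" where
  "right_dual r = {\<phi>. addhom \<phi> \<and> (\<forall>x a. \<phi> (r x a) = \<phi> x * a)}"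

definition wedgeT :: "('e \<Rightarrow> 'e \<Rightarrow> 't::ab_group_add) \<Rightarrow> ('e \<Rightarrow> 'e \<Rightarrow> 'f::ab_group_add) \<Rightarrow> 't \<Rightarrow> 'f" where
  "wedgeT tEE wedge = tmap tEE wedge"

text \<open>P_sym: the idempotent with image ker(wedge) and kernel F.\<close>
definition Psym :: "('e \<Rightarrow> 'e \<Rightarrow> 't::ab_group_add) \<Rightarrow> ('e \<Rightarrow> 'e \<Rightarrow> 'f::ab_group_add) \<Rightarrow> 't set \<Rightarrow> 't \<Rightarrow> 't" where
  "Psym tEE wedge Fs \<tau> = (THE k. wedgeT tEE wedge k = 0 \<and> \<tau> - k \<in> Fs)"

definition sigma :: "('e \<Rightarrow> 'e \<Rightarrow> 't::ab_group_add) \<Rightarrow> ('e \<Rightarrow> 'e \<Rightarrow> 'f::ab_group_add) \<Rightarrow> 't set \<Rightarrow> 't \<Rightarrow> 't" where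
  "sigma tEE wedge Fs \<tau> = (Psym tEE wedge Fs \<tau> + Psym tEE wedge Fs \<tau>) - \<tau>"

definition is_connection ::
  "(complex \<Rightarrow> 'a::ring_1) \<Rightarrow> ('e::ab_group_add \<Rightarrow> 'a \<Rightarrow> 'e) \<Rightarrow> ('t::ab_group_add \<Rightarrow> 'a \<Rightarrow> 't)
     \<Rightarrow> ('a \<Rightarrow> 'e) \<Rightarrow> ('e \<Rightarrow> 'e \<Rightarrow> 't) \<Rightarrow> ('e \<Rightarrow> 't) \<Rightarrow> bool" where
  "is_connection \<iota> rE rT d0 tEE nabla \<longleftrightarrow> addhom nabla \<and>
     (\<forall>\<omega> c. nabla (rE \<omega> (\<iota> c)) = rT (nabla \<omega>) (\<iota> c)) \<and>
     (\<forall>\<omega> a. nabla (rE \<omega> a) = rT (nabla \<omega>) a + tEE \<omega> (d0 a))"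

definition torsionless :: "('e \<Rightarrow> 'e \<Rightarrow> 't::ab_group_add) \<Rightarrow> ('e \<Rightarrow> 'e \<Rightarrow> 'f::ab_group_add)
     \<Rightarrow> ('e \<Rightarrow> 'f) \<Rightarrow> ('e \<Rightarrow> 't) \<Rightarrow> bool" where
  "torsionless tEE wedge d1 nabla \<longleftrightarrow> (\<forall>\<omega>. wedgeT tEE wedge (nabla \<omega>) + d1 \<omega> = 0)"

text \<open>E \<otimes>_A E \<otimes>_A E is modelled as E \<otimes>_A (E \<otimes>_A E) with x \<otimes> \<tau> = tES x \<tau>.
  For \<tau> in E \<otimes> E and z in E, tens_r tEE tES \<tau> z is \<tau> \<otimes> z (via associativity);
  sigma23 = id \<otimes> sigma; gid = g \<otimes> id.\<close>
definition tens_r :: "('e \<Rightarrow> 'e \<Rightarrow> 't::ab_group_add) \<Rightarrow> ('e \<Rightarrow> 't \<Rightarrow> 's::ab_group_add) \<Rightarrow> 't \<Rightarrow> 'e \<Rightarrow> 's" where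
  "tens_r tEE tES \<tau> z = tmap tEE (\<lambda>x y. tES x (tEE y z)) \<tau>"

definition sigma23 :: "('t \<Rightarrow> 't) \<Rightarrow> ('e \<Rightarrow> 't::ab_group_add \<Rightarrow> 's::ab_group_add) \<Rightarrow> 's \<Rightarrow> 's" where
  "sigma23 \<sigma> tES = tmap tES (\<lambda>x \<tau>. tES x (\<sigma> \<tau>))"

definition gid :: "('a \<Rightarrow> 'e \<Rightarrow> 'e) \<Rightarrow> ('e \<Rightarrow> 'e \<Rightarrow> 't::ab_group_add) \<Rightarrow> ('e \<Rightarrow> 't \<Rightarrow> 's::ab_group_add)
     \<Rightarrow> ('t \<Rightarrow> 'a) \<Rightarrow> 's \<Rightarrow> 'e::ab_group_add" where
  "gid lE tEE tES g = tmap tES (\<lambda>x \<tau>. tmap tEE (\<lambda>y z. lE (g (tEE x y)) z) \<tau>)"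

definition compatible_Z ::
  "('a::ring_1 \<Rightarrow> 'e::ab_group_add \<Rightarrow> 'e) \<Rightarrow> ('e \<Rightarrow> 'a \<Rightarrow> 'e) \<Rightarrow> ('a \<Rightarrow> 'e) \<Rightarrow> ('e \<Rightarrow> 'e \<Rightarrow> 't::ab_group_add)
     \<Rightarrow> ('e \<Rightarrow> 't \<Rightarrow> 's::ab_group_add) \<Rightarrow> ('t \<Rightarrow> 't) \<Rightarrow> ('t \<Rightarrow> 'a) \<Rightarrow> ('e \<Rightarrow> 't) \<Rightarrow> bool" where
  "compatible_Z lE rE d0 tEE tES \<sigma> g nabla \<longleftrightarrow>
     (\<forall>\<omega>\<in>bcenter lE rE. \<forall>\<eta>\<in>bcenter lE rE.
        gid lE tEE tES g (sigma23 \<sigma> tES (tens_r tEE tES (nabla \<omega>) \<eta>))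
        + gid lE tEE tES g (tES \<omega> (nabla \<eta>)) = d0 (g (tEE \<omega> \<eta>)))"

end

theory Submission
  imports Defs
begin

text \<open>Projectivity of E and condition (1) give a finite frame of central forms \<xi>_j with
  right-linear coordinates \<psi>_j, so additive maps that are right-linear, or balanced over the
  centre, are determined by their values on central arguments; on those, g is symmetric and
  central.

  Existence: the Grassmann connection x \<mapsto> \<Sum>_j \<xi>_j \<otimes> d\<psi>_j(x), minus Q^-1 of its torsion, is a
  torsion-free connection \<nabla>_0. Its failure D(\<omega>,\<eta>) to be compatible with g is symmetric on
  central forms. By nondegeneracy of g the Koszul-type expression
  (g(D(\<omega>,\<eta>),\<zeta>) + g(D(\<omega>,\<zeta>),\<eta>) - g(D(\<eta>,\<zeta>),\<omega>))/2 is g(G(\<omega>,\<eta>),\<zeta>) for a form G(\<omega>,\<eta>);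
  then G(\<omega>,\<eta>) + G(\<eta>,\<omega>) = D(\<omega>,\<eta>), and symmetry in \<eta>, \<zeta> makes
  \<Sum>_j G(\<omega>,\<xi>_j) \<otimes> \<xi>'_j (with \<xi>'_j dual to \<psi>_j under g) fixed by \<sigma>, i.e. in the kernel of the wedge
  product. Extended right-linearly from Z(E) and added to \<nabla>_0, it gives a torsion-free
  connection compatible with g on Z(E).

  Uniqueness: the difference \<delta> of two such connections is right-linear with values in the
  kernel of the wedge product, hence \<sigma>-invariant. So g(\<delta>(\<omega>)(\<eta>), \<zeta>) for central \<omega>, \<eta>, \<zeta>
  is symmetric in \<eta>, \<zeta> and, by compatibility, antisymmetric in \<omega>, \<eta>; such a form vanishes.\<close>

section \<open>Balanced tensor products\<close>

lemma zmult_add: "zmult (k + l) (x::'g::ab_group_add) = zmult k x + zmult l x"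
proof -
  define S where "S n = (\<Sum>i<n. x)" for n :: nat
  have S_add: "S (m + n) = S m + S n" for m n
    unfolding S_def by (induction n) (auto simp: add_ac)
  have zmult_S: "zmult j x = S (nat j) - S (nat (- j))" for j
    by (simp add: zmult_def S_def)
  have "nat (k + l) + nat (- k) + nat (- l) = nat (- (k + l)) + nat k + nat l"
    by arith
  then have "S (nat (k + l)) + S (nat (- k)) + S (nat (- l))
      = S (nat (- (k + l))) + S (nat k) + S (nat l)"
    by (simp only: S_add[symmetric])
  then have "S (nat (k + l)) - S (nat (- (k + l)))
      = (S (nat k) - S (nat (- k))) + (S (nat l) - S (nat (- l)))"
    by (simp add: algebra_simps)
  then show ?thesis
    unfolding zmult_S .
qed

lemma zmult_one [simp]: "zmult 1 x = x"
  by (simp add: zmult_def)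

lemma (in additive) zmult: "f (zmult k x) = zmult k (f x)"
  by (simp add: zmult_def minus sum)

lemma additive_lift2:
  fixes t :: "'m \<Rightarrow> 'n \<Rightarrow> 'p::ab_group_add"
  shows "additive (lift2 t)"
proof
  fix x y :: "('m \<times> 'n) \<Rightarrow>\<^sub>0 int"
  define K where "K = Poly_Mapping.keys x \<union> Poly_Mapping.keys y"
  have lift2_on: "lift2 t z = (\<Sum>p\<in>K. zmult (Poly_Mapping.lookup z p) (t (fst p) (snd p)))"
    if "Poly_Mapping.keys z \<subseteq> K" for z
    unfolding lift2_def
    by (rule sum.mono_neutral_left) (use that in \<open>auto simp: K_def in_keys_iff zmult_def\<close>)
  have "Poly_Mapping.keys (x + y) \<subseteq> K"
    unfolding K_def by (rule keys_add)
  then show "lift2 t (x + y) = lift2 t x + lift2 t y"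
    by (simp add: lift2_on K_def lookup_add zmult_add sum.distrib)
qed

lemmas lift2_zero = additive.zero[OF additive_lift2]
lemmas lift2_diff = additive.diff[OF additive_lift2]
lemmas lift2_sum = additive.sum[OF additive_lift2]

lemma lift2_single: "lift2 t (Poly_Mapping.single p k) = zmult k (t (fst p) (snd p))"
  by (cases "k = 0") (simp_all add: lift2_def zmult_def)

definition balanced ::
  "'m::plus set \<Rightarrow> 'n::plus set \<Rightarrow> 's set \<Rightarrow> ('m \<Rightarrow> 's \<Rightarrow> 'm) \<Rightarrow> ('s \<Rightarrow> 'n \<Rightarrow> 'n)
     \<Rightarrow> ('m \<Rightarrow> 'n \<Rightarrow> 'p::plus) \<Rightarrow> bool" where
  "balanced M N S rmul lmul f \<longleftrightarrow>
    (\<forall>m\<in>M. \<forall>m'\<in>M. \<forall>n\<in>N. f (m + m') n = f m n + f m' n) \<and>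
    (\<forall>m\<in>M. \<forall>n\<in>N. \<forall>n'\<in>N. f m (n + n') = f m n + f m n') \<and>
    (\<forall>m\<in>M. \<forall>n\<in>N. \<forall>a\<in>S. f (rmul m a) n = f m (lmul a n))"

lemma balanced_UNIV_iff:
  "balanced UNIV UNIV S rmul lmul f \<longleftrightarrow>
    (\<forall>m m' n. f (m + m') n = f m n + f m' n) \<and> (\<forall>m n n'. f m (n + n') = f m n + f m n') \<and>
    (\<forall>m n. \<forall>a\<in>S. f (rmul m a) n = f m (lmul a n))"
  by (simp add: balanced_def)

lemma lift2_tensor_rel:
  assumes "balanced M N S rmul lmul f" "x \<in> tensor_rel M N S rmul lmul"
  shows "lift2 f x = 0"
  using assms(2)
proof induction
  case (rel_diff x y)
  then show ?case
    by (simp add: lift2_diff)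
qed (use assms(1) in \<open>simp_all add: balanced_def lift2_zero lift2_diff lift2_single\<close>)

lemma is_tensor_surj:
  "is_tensor M N S rmul lmul t \<Longrightarrow> \<exists>x. Poly_Mapping.keys x \<subseteq> M \<times> N \<and> lift2 t x = \<tau>"
  by (simp add: is_tensor_def)

lemma is_tensor_balanced:
  assumes "is_tensor UNIV UNIV S rmul lmul t"
  shows "balanced UNIV UNIV S rmul lmul t"
proof -
  have rel: "lift2 t x = 0" if "x \<in> tensor_rel UNIV UNIV S rmul lmul" for x
    using assms that by (simp add: is_tensor_def)
  show ?thesis
    unfolding balanced_UNIV_iff
    using rel[OF tensor_rel.rel_addl] rel[OF tensor_rel.rel_addr] rel[OF tensor_rel.rel_bal]
    by (simp add: lift2_diff lift2_single diff_eq_eq add.commute)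
qed

lemma is_tensor_lift2_eq:
  assumes "is_tensor M N S rmul lmul t" "balanced M N S rmul lmul f"
    and "Poly_Mapping.keys x \<subseteq> M \<times> N" "Poly_Mapping.keys y \<subseteq> M \<times> N" "lift2 t x = lift2 t y"
  shows "lift2 f x = lift2 f y"
proof -
  have "Poly_Mapping.keys (x - y) \<subseteq> M \<times> N"
    using assms(3,4) keys_diff[of x y] by blast
  moreover have "lift2 t (x - y) = 0"
    using assms(5) by (simp add: lift2_diff)
  ultimately have "x - y \<in> tensor_rel M N S rmul lmul"
    using assms(1) by (simp add: is_tensor_def)
  then have "lift2 f (x - y) = 0"
    by (rule lift2_tensor_rel[OF assms(2)])
  then show ?thesis
    by (simp add: lift2_diff)
qed

context
  fixes t :: "'m::ab_group_add \<Rightarrow> 'n::ab_group_add \<Rightarrow> 't::ab_group_add"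
    and f :: "'m \<Rightarrow> 'n \<Rightarrow> 'p::ab_group_add"
    and S :: "'s set" and rmul :: "'m \<Rightarrow> 's \<Rightarrow> 'm" and lmul :: "'s \<Rightarrow> 'n \<Rightarrow> 'n"
  assumes tensor: "is_tensor UNIV UNIV S rmul lmul t"
    and bal: "balanced UNIV UNIV S rmul lmul f"
begin

lemma tmap_lift2: "tmap t f (lift2 t x) = lift2 f x"
proof -
  have "lift2 t (SOME y. lift2 t y = lift2 t x) = lift2 t x"
    by (rule someI) (rule refl)
  then have "lift2 f (SOME y. lift2 t y = lift2 t x) = lift2 f x"
    by (rule is_tensor_lift2_eq[OF tensor bal, rotated 2]) simp_all
  then show ?thesis
    by (simp add: tmap_def)
qed

lemma tmap_tensor [simp]: "tmap t f (t m n) = f m n"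
  using tmap_lift2[of "Poly_Mapping.single (m, n) 1"] by (simp add: lift2_single)

lemma additive_tmap: "additive (tmap t f)"
proof
  fix a b :: 't
  obtain x y where ab: "a = lift2 t x" "b = lift2 t y"
    using is_tensor_surj[OF tensor, of a] is_tensor_surj[OF tensor, of b] by metis
  have "tmap t f (a + b) = tmap t f (lift2 t (x + y))"
    using ab by (simp add: additive.add[OF additive_lift2])
  also have "\<dots> = tmap t f a + tmap t f b"
    unfolding tmap_lift2 ab by (simp only: tmap_lift2 additive.add[OF additive_lift2])
  finally show "tmap t f (a + b) = tmap t f a + tmap t f b" .
qed

end

lemma is_tensor_induct [consumes 1, case_names zero add uminus tensor]:
  assumes "is_tensor M N S rmul lmul t"
    and "P 0" "\<And>a b. P a \<Longrightarrow> P b \<Longrightarrow> P (a + b)" "\<And>a. P a \<Longrightarrow> P (- a)"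
    and "\<And>m n. m \<in> M \<Longrightarrow> n \<in> N \<Longrightarrow> P (t m n)"
  shows "P \<tau>"
proof -
  have zmult_closed: "P (zmult k (t m n))" if "m \<in> M" "n \<in> N" for k m n
  proof -
    have "P (\<Sum>i<j. t m n)" for j :: nat
      using assms(5)[OF that] by (induction j) (simp_all add: assms(2,3))
    then show ?thesis
      by (simp add: zmult_def assms(4))
  qed
  obtain x where x: "Poly_Mapping.keys x \<subseteq> M \<times> N" "lift2 t x = \<tau>"
    using is_tensor_surj[OF assms(1)] by blast
  have "P (\<Sum>p\<in>K. zmult (Poly_Mapping.lookup x p) (t (fst p) (snd p)))" if "K \<subseteq> M \<times> N" for K
    using that by (induction K rule: infinite_finite_induct) (auto simp: assms(2,3) zmult_closed)
  then have "P (lift2 t x)"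
    using x(1) unfolding lift2_def by blast
  then show ?thesis
    using x(2) by simp
qed

lemma is_tensor_additive_eq:
  assumes "is_tensor M N S rmul lmul t" "additive f" "additive g"
    and "\<And>m n. m \<in> M \<Longrightarrow> n \<in> N \<Longrightarrow> f (t m n) = g (t m n)"
  shows "f \<tau> = g \<tau>"
  using assms(1)
proof (induction rule: is_tensor_induct)
  case zero
  show ?case
    using additive.zero[OF assms(2)] additive.zero[OF assms(3)] by simp
next
  case (add a b)
  then show ?case
    using additive.add[OF assms(2)] additive.add[OF assms(3)] by simp
next
  case (uminus a)
  then show ?case
    using additive.minus[OF assms(2)] additive.minus[OF assms(3)] by simp
next
  case (tensor m n)
  then show ?case
    by (rule assms(4))
qed

lemma addhom_eq_additive: "addhom = additive"
  by (simp add: fun_eq_iff addhom_def additive_def)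

locale rmod =
  fixes r :: "'m::ab_group_add \<Rightarrow> 'a::ring_1 \<Rightarrow> 'm"
  assumes right_module: "right_module r"
begin

lemma rscale_add: "r (x + y) a = r x a + r y a"
  and rscale_add_scalar: "r x (a + b) = r x a + r x b"
  and rscale_mult: "r x (a * b) = r (r x a) b"
  and rscale_one [simp]: "r x 1 = x"
  using right_module by (simp_all add: right_module_def)

lemma additive_rscale: "additive (\<lambda>x. r x a)"
  by (simp add: additive_def rscale_add)

lemma additive_rscale_scalar: "additive (r x)"
  by (simp add: additive_def rscale_add_scalar)

lemmas rscale_zero [simp] = additive.zero[OF additive_rscale]
lemmas rscale_diff = additive.diff[OF additive_rscale]
lemmas rscale_sum = additive.sum[OF additive_rscale]

end

locale bimod = rmod r
  for r :: "'m::ab_group_add \<Rightarrow> 'a::ring_1 \<Rightarrow> 'm" +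
  fixes l :: "'a \<Rightarrow> 'm \<Rightarrow> 'm"
  assumes left_module: "left_module l"
    and lscale_rscale: "l a (r x b) = r (l a x) b"
begin

lemma lscale_add: "l a (x + y) = l a x + l a y"
  and lscale_add_scalar: "l (a + b) x = l a x + l b x"
  and lscale_mult: "l (a * b) x = l a (l b x)"
  and lscale_one [simp]: "l 1 x = x"
  using left_module by (simp_all add: left_module_def)

lemma lscale_zero [simp]: "l a 0 = 0"
  using additive.zero[of "l a"] by (simp add: additive_def lscale_add)

end

lemma bimodule_bimod: "bimodule \<iota> l r \<Longrightarrow> bimod r l"
  by (simp add: bimodule_def bimod_def bimod_axioms_def rmod_def)

lemma antisym_sym_vanish:
  fixes s :: "'x \<Rightarrow> 'x \<Rightarrow> 'x \<Rightarrow> 'y::ab_group_add"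
  assumes antisym: "\<And>a b c. a \<in> A \<Longrightarrow> b \<in> A \<Longrightarrow> c \<in> A \<Longrightarrow> s a b c = - s b a c"
    and sym: "\<And>a b c. a \<in> A \<Longrightarrow> b \<in> A \<Longrightarrow> c \<in> A \<Longrightarrow> s a b c = s a c b"
    and no_2_torsion: "\<And>y::'y. y + y = 0 \<Longrightarrow> y = 0"
    and A: "a \<in> A" "b \<in> A" "c \<in> A"
  shows "s a b c = 0"
proof -
  have "s a b c = - s b a c" using antisym[of a b c] A by simp
  also have "\<dots> = - s b c a" using sym[of b a c] A by simp
  also have "\<dots> = s c b a" using antisym[of b c a] A by simp
  also have "\<dots> = s c a b" using sym[of c b a] A by simp
  also have "\<dots> = - s a c b" using antisym[of c a b] A by simp
  also have "\<dots> = - s a b c" using sym[of a b c] A by simp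
  finally have "s a b c + s a b c = 0"
    by (simp add: eq_neg_iff_add_eq_0)
  then show ?thesis
    by (rule no_2_torsion)
qed

lemma fg_projective_right_dual_basis:
  assumes "fg_projective_right r"
  obtains n and e :: "nat \<Rightarrow> 'm::ab_group_add" and \<phi> :: "nat \<Rightarrow> 'm \<Rightarrow> 'a::ring_1"
  where "\<And>k. additive (\<phi> k)" "\<And>k x a. \<phi> k (r x a) = \<phi> k x * a"
    and "\<And>x. x = (\<Sum>k<n. r (e k) (\<phi> k x))"
proof -
  obtain n :: nat and i :: "'m \<Rightarrow> nat \<Rightarrow> 'a" and p :: "(nat \<Rightarrow> 'a) \<Rightarrow> 'm" where
    ip: "\<forall>x k. n \<le> k \<longrightarrow> i x k = 0" "\<forall>x y. i (x + y) = (\<lambda>k. i x k + i y k)"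
      "\<forall>x a. i (r x a) = (\<lambda>k. i x k * a)" "\<forall>v w. p (\<lambda>k. v k + w k) = p v + p w"
      "\<forall>v a. p (\<lambda>k. v k * a) = r (p v) a" "\<forall>x. p (i x) = x"
    using assms unfolding fg_projective_right_def by blast
  define \<delta> where "\<delta> k = (\<lambda>j::nat. if j = k then (1::'a) else 0)" for k
  have p_sum: "p (\<lambda>j. \<Sum>k\<in>K. f k j) = (\<Sum>k\<in>K. p (f k))" if "finite K" for K and f :: "nat \<Rightarrow> nat \<Rightarrow> 'a"
    using that
  proof induction
    case empty
    have "p (\<lambda>k. 0) = p (\<lambda>k. 0) + p (\<lambda>k. 0)"
      using ip(4)[rule_format, of "\<lambda>k. 0" "\<lambda>k. 0"] by simp
    then show ?case by simp
  next
    case (insert a K)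
    have "p (\<lambda>j. \<Sum>k\<in>insert a K. f k j) = p (\<lambda>j. f a j + (\<Sum>k\<in>K. f k j))"
      using insert(1,2) by simp
    also have "\<dots> = p (f a) + p (\<lambda>j. \<Sum>k\<in>K. f k j)"
      using ip(4) by (metis (no_types))
    finally show ?case
      using insert by simp
  qed
  have "additive (\<lambda>x. i x k)" for k
    using ip(2) by (simp add: additive_def)
  moreover have "i (r x a) k = i x k * a" for k x a
    using ip(3) by simp
  moreover have "x = (\<Sum>k<n. r (p (\<delta> k)) (i x k))" for x
  proof -
    have "(\<Sum>k<n. \<delta> k j * i x k) = i x j" for j
    proof -
      have "(\<Sum>k<n. \<delta> k j * i x k) = (\<Sum>k<n. if j = k then i x k else 0)"
        by (rule sum.cong) (simp_all add: \<delta>_def)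
      also have "\<dots> = i x j"
        using ip(1) by simp
      finally show ?thesis .
    qed
    then have "i x = (\<lambda>j. \<Sum>k<n. \<delta> k j * i x k)"
      by simp
    then have "x = p (\<lambda>j. \<Sum>k<n. \<delta> k j * i x k)"
      using ip(6) by metis
    also have "\<dots> = (\<Sum>k<n. r (p (\<delta> k)) (i x k))"
      using ip(5) by (simp add: p_sum)
    finally show ?thesis .
  qed
  ultimately show thesis
    by (rule that)
qed

section \<open>Flip, metric and contractions\<close>

locale levi_civita =
  fixes \<iota> :: "complex \<Rightarrow> 'a::ring_1"
    and lE :: "'a \<Rightarrow> 'e::ab_group_add \<Rightarrow> 'e" and rE :: "'e \<Rightarrow> 'a \<Rightarrow> 'e"
    and rF :: "'f::ab_group_add \<Rightarrow> 'a \<Rightarrow> 'f"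
    and d0 :: "'a \<Rightarrow> 'e" and d1 :: "'e \<Rightarrow> 'f" and wedge :: "'e \<Rightarrow> 'e \<Rightarrow> 'f"
    and tEE :: "'e \<Rightarrow> 'e \<Rightarrow> 't::ab_group_add" and lT :: "'a \<Rightarrow> 't \<Rightarrow> 't" and rT :: "'t \<Rightarrow> 'a \<Rightarrow> 't"
    and tES :: "'e \<Rightarrow> 't \<Rightarrow> 's::ab_group_add"
    and Fs :: "'t set" and g :: "'t \<Rightarrow> 'a"
  assumes complex_algebra: "complex_algebra \<iota>"
    and bimodule_E: "bimodule \<iota> lE rE"
    and bimodule_T: "bimodule \<iota> lT rT"
    and right_module_F: "right_module rF"
    and fg_projective: "fg_projective_right rE"
    and additive_d0: "additive d0"
    and d0_iota_mult: "d0 (\<iota> c * a) = lE (\<iota> c) (d0 a)"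
    and d0_mult: "d0 (a * b) = rE (d0 a) b + lE a (d0 b)"
    and additive_d1: "additive d1"
    and d1_rscale: "d1 (rE \<omega> a) = rF (d1 \<omega>) a - wedge \<omega> (d0 a)"
    and wedge_add_left: "wedge (x + x') y = wedge x y + wedge x' y"
    and wedge_add_right: "wedge x (y + y') = wedge x y + wedge x y'"
    and wedge_balanced: "wedge (rE x a) y = wedge x (lE a y)"
    and wedge_rscale: "wedge x (rE y a) = rF (wedge x y) a"
    and tensor_EE: "is_tensor UNIV UNIV UNIV rE lE tEE"
    and lT_tEE: "lT a (tEE x y) = tEE (lE a x) y"
    and rT_tEE: "rT (tEE x y) a = tEE x (rE y a)"
    and tensor_ES: "is_tensor UNIV UNIV UNIV rE lT tES"
    and central_tensor: "is_tensor (bcenter lE rE) UNIV acenter rE (*) rE"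
    and F_zero: "0 \<in> Fs"
    and F_add: "\<tau> \<in> Fs \<Longrightarrow> \<tau>' \<in> Fs \<Longrightarrow> \<tau> + \<tau>' \<in> Fs"
    and F_uminus: "\<tau> \<in> Fs \<Longrightarrow> - \<tau> \<in> Fs"
    and F_rscale: "\<tau> \<in> Fs \<Longrightarrow> rT \<tau> a \<in> Fs"
    and ker_wedge_F_span: "\<exists>k f. wedgeT tEE wedge k = 0 \<and> f \<in> Fs \<and> \<tau> = k + f"
    and ker_wedge_F_inter: "\<tau> \<in> Fs \<Longrightarrow> wedgeT tEE wedge \<tau> = 0 \<Longrightarrow> \<tau> = 0"
    and wedge_F_bij: "bij_betw (wedgeT tEE wedge) Fs UNIV"
    and sigma_central: "\<omega> \<in> bcenter lE rE \<Longrightarrow> \<eta> \<in> bcenter lE rE \<Longrightarrow>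
      sigma tEE wedge Fs (tEE \<omega> \<eta>) = tEE \<eta> \<omega>"
    and additive_g: "additive g"
    and g_lT: "g (lT a \<tau>) = a * g \<tau>"
    and g_rT: "g (rT \<tau> a) = g \<tau> * a"
    and g_sigma: "g (sigma tEE wedge Fs \<tau>) = g \<tau>"
    and g_nondegenerate: "bij_betw (\<lambda>e x. g (tEE e x)) UNIV (right_dual rE)"
begin

sublocale E: bimod rE lE
  using bimodule_E by (rule bimodule_bimod)

sublocale T: bimod rT lT
  using bimodule_T by (rule bimodule_bimod)

sublocale F: rmod rF
  using right_module_F by unfold_locales

abbreviation "Z \<equiv> bcenter lE rE"
abbreviation "W \<equiv> wedgeT tEE wedge"
abbreviation "\<sigma> \<equiv> sigma tEE wedge Fs"
abbreviation "Ps \<equiv> Psym tEE wedge Fs"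

lemma central_lscale: "\<omega> \<in> Z \<Longrightarrow> lE a \<omega> = rE \<omega> a"
  by (simp add: bcenter_def)

lemma central_add: "u \<in> Z \<Longrightarrow> v \<in> Z \<Longrightarrow> u + v \<in> Z"
  by (simp add: bcenter_def E.lscale_add E.rscale_add)

lemma central_rscale_acenter:
  assumes "u \<in> Z" "z \<in> acenter"
  shows "rE u z \<in> Z"
proof -
  have "lE a (rE u z) = rE (rE u z) a" for a
  proof -
    have "lE a (rE u z) = rE u (a * z)"
      using assms(1) by (simp add: E.lscale_rscale central_lscale E.rscale_mult)
    also have "\<dots> = rE u (z * a)"
      using assms(2) by (simp add: acenter_def)
    also have "\<dots> = rE (rE u z) a"
      by (simp add: E.rscale_mult)
    finally show ?thesis .
  qed
  then show ?thesis
    by (simp add: bcenter_def)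
qed

definition half :: 'a where
  "half = \<iota> (1 / 2)"

lemma half_commute: "half * a = a * half"
  using complex_algebra by (simp add: half_def complex_algebra_def)

lemma half_add_half: "half + half = 1"
proof -
  have add: "\<iota> (c + d) = \<iota> c + \<iota> d" for c d
    using complex_algebra by (simp add: complex_algebra_def)
  have "half + half = \<iota> (1 / 2 + 1 / 2)"
    unfolding half_def by (rule add[symmetric])
  also have "\<dots> = 1"
    using complex_algebra by (simp add: complex_algebra_def)
  finally show ?thesis .
qed

lemma double_eq_zero: "(x::'a) + x = 0 \<Longrightarrow> x = 0"
  by (metis half_add_half distrib_left mult.right_neutral mult_zero_left half_commute)

lemma T_double_eq_zero: "(x::'t) + x = 0 \<Longrightarrow> x = 0"
  by (metis T.rscale_add T.rscale_add_scalar T.rscale_one T.rscale_zero half_add_half)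

lemma tEE_add_left: "tEE (x + x') y = tEE x y + tEE x' y"
  and tEE_add_right: "tEE x (y + y') = tEE x y + tEE x y'"
  and tEE_balanced: "tEE (rE x a) y = tEE x (lE a y)"
  using is_tensor_balanced[OF tensor_EE] by (simp_all add: balanced_UNIV_iff)

lemma tES_add_left: "tES (x + x') \<tau> = tES x \<tau> + tES x' \<tau>"
  and tES_add_right: "tES x (\<tau> + \<tau>') = tES x \<tau> + tES x \<tau>'"
  and tES_balanced: "tES (rE x a) \<tau> = tES x (lT a \<tau>)"
  using is_tensor_balanced[OF tensor_ES] by (simp_all add: balanced_UNIV_iff)

lemma additive_tEE_left: "additive (\<lambda>x. tEE x y)"
  and additive_tEE_right: "additive (tEE x)"
  by (simp_all add: additive_def tEE_add_left tEE_add_right)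

lemmas tEE_zero_left [simp] = additive.zero[OF additive_tEE_left]
lemmas tEE_zero_right [simp] = additive.zero[OF additive_tEE_right]
lemmas tEE_minus_left = additive.minus[OF additive_tEE_left]
lemmas tEE_sum_left = additive.sum[OF additive_tEE_left]
lemmas tEE_sum_right = additive.sum[OF additive_tEE_right]

lemmas g_add = additive.add[OF additive_g]
lemmas g_zero [simp] = additive.zero[OF additive_g]
lemmas g_sum = additive.sum[OF additive_g]

lemma g_tEE_rscale: "g (tEE x (rE y a)) = g (tEE x y) * a"
  by (simp flip: rT_tEE add: g_rT)

lemma g_tEE_lscale: "g (tEE (lE a x) y) = a * g (tEE x y)"
  by (simp flip: lT_tEE add: g_lT)

lemma tEE_rscale_central: "v \<in> Z \<Longrightarrow> tEE x (rE v c) = tEE (rE x c) v"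
  by (simp add: tEE_balanced central_lscale)

lemma g_tEE_central_commute:
  assumes "\<omega> \<in> Z" "\<eta> \<in> Z"
  shows "g (tEE \<omega> \<eta>) * a = a * g (tEE \<omega> \<eta>)"
proof -
  have "a * g (tEE \<omega> \<eta>) = g (tEE \<omega> (rE \<eta> a))"
    using assms by (simp flip: g_tEE_lscale add: central_lscale tEE_balanced)
  then show ?thesis
    by (simp add: g_tEE_rscale)
qed

lemma g_tEE_rscale_left: "\<zeta> \<in> Z \<Longrightarrow> g (tEE (rE x c) \<zeta>) = g (tEE x \<zeta>) * c"
  by (simp add: tEE_balanced central_lscale g_tEE_rscale)

lemma g_tEE_inj: "(\<And>\<zeta>. g (tEE x \<zeta>) = g (tEE y \<zeta>)) \<Longrightarrow> x = y"
  using g_nondegenerate by (simp add: bij_betw_def inj_def fun_eq_iff)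

lemma balanced_wedge: "balanced UNIV UNIV UNIV rE lE wedge"
  by (simp add: balanced_UNIV_iff wedge_add_left wedge_add_right wedge_balanced)

lemma W_tEE [simp]: "W (tEE x y) = wedge x y"
  unfolding wedgeT_def by (rule tmap_tensor[OF tensor_EE balanced_wedge])

lemma additive_W: "additive W"
  unfolding wedgeT_def by (rule additive_tmap[OF tensor_EE balanced_wedge])

lemmas W_add = additive.add[OF additive_W]
lemmas W_zero [simp] = additive.zero[OF additive_W]
lemmas W_diff = additive.diff[OF additive_W]
lemmas W_sum = additive.sum[OF additive_W]

lemma W_rT: "W (rT \<tau> a) = rF (W \<tau>) a"
  by (rule is_tensor_additive_eq[OF tensor_EE, where f = "\<lambda>\<tau>. W (rT \<tau> a)"])
    (simp_all add: additive_def T.rscale_add W_add F.rscale_add rT_tEE wedge_rscale)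

lemma Psym_eqI:
  assumes "W k = 0" "\<tau> - k \<in> Fs"
  shows "Ps \<tau> = k"
  unfolding Psym_def
proof (rule the_equality)
  show "W k = 0 \<and> \<tau> - k \<in> Fs"
    using assms by simp
next
  fix k'
  assume k': "W k' = 0 \<and> \<tau> - k' \<in> Fs"
  have "k' - k = (\<tau> - k) + - (\<tau> - k')"
    by simp
  also have "\<dots> \<in> Fs"
    using assms k' by (intro F_add F_uminus) simp_all
  finally have "k' - k \<in> Fs" .
  moreover have "W (k' - k) = 0"
    using assms k' by (simp add: W_diff)
  ultimately show "k' = k"
    using ker_wedge_F_inter by force
qed

lemma W_Psym: "W (Ps \<tau>) = 0"
  and Psym_complement: "\<tau> - Ps \<tau> \<in> Fs"
proof -
  obtain k f where kf: "W k = 0" "f \<in> Fs" "\<tau> = k + f"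
    using ker_wedge_F_span by blast
  then have "Ps \<tau> = k"
    by (intro Psym_eqI) simp_all
  then show "W (Ps \<tau>) = 0" "\<tau> - Ps \<tau> \<in> Fs"
    using kf by simp_all
qed

lemma Psym_add: "Ps (a + b) = Ps a + Ps b"
proof (rule Psym_eqI)
  show "W (Ps a + Ps b) = 0"
    by (simp add: W_add W_Psym)
  have "a + b - (Ps a + Ps b) = (a - Ps a) + (b - Ps b)"
    by simp
  also have "\<dots> \<in> Fs"
    by (rule F_add[OF Psym_complement Psym_complement])
  finally show "a + b - (Ps a + Ps b) \<in> Fs" .
qed

lemma Psym_rT: "Ps (rT \<tau> a) = rT (Ps \<tau>) a"
proof (rule Psym_eqI)
  show "W (rT (Ps \<tau>) a) = 0"
    by (simp add: W_rT W_Psym)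
  show "rT \<tau> a - rT (Ps \<tau>) a \<in> Fs"
    using F_rscale[OF Psym_complement] by (simp add: T.rscale_diff)
qed

lemma sigma_eq: "\<sigma> \<tau> = Ps \<tau> + Ps \<tau> - \<tau>"
  by (simp add: sigma_def)

lemma additive_sigma: "additive \<sigma>"
  by (simp add: additive_def sigma_eq Psym_add algebra_simps)

lemmas sigma_add = additive.add[OF additive_sigma]

lemma sigma_rT: "\<sigma> (rT \<tau> a) = rT (\<sigma> \<tau>) a"
  by (simp add: sigma_eq Psym_rT T.rscale_add T.rscale_diff)

lemma sigma_rT_central:
  "u \<in> Z \<Longrightarrow> v \<in> Z \<Longrightarrow> \<sigma> (rT (tEE u v) c) = tEE v (rE u c)"
  by (subst sigma_rT) (simp add: sigma_central rT_tEE)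

lemma sigma_ker_W: "W \<tau> = 0 \<Longrightarrow> \<sigma> \<tau> = \<tau>"
  using Psym_eqI[of \<tau> \<tau>] by (simp add: sigma_eq F_zero)

lemma W_sigma_fixed:
  assumes "\<sigma> \<tau> = \<tau>"
  shows "W \<tau> = 0"
proof -
  have "(Ps \<tau> - \<tau>) + (Ps \<tau> - \<tau>) = \<sigma> \<tau> - \<tau>"
    by (simp add: sigma_eq algebra_simps)
  then have "(Ps \<tau> - \<tau>) + (Ps \<tau> - \<tau>) = 0"
    using assms by simp
  then have "Ps \<tau> - \<tau> = 0"
    by (rule T_double_eq_zero)
  then show ?thesis
    using W_Psym[of \<tau>] by simp
qed

definition contr :: "'e \<Rightarrow> 't \<Rightarrow> 'e" where
  "contr x = tmap tEE (\<lambda>y z. lE (g (tEE x y)) z)"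

lemma balanced_contr: "balanced UNIV UNIV UNIV rE lE (\<lambda>y z. lE (g (tEE x y)) z)"
  by (simp add: balanced_UNIV_iff tEE_add_right g_add E.lscale_add_scalar E.lscale_add
      g_tEE_rscale E.lscale_mult)

lemma contr_tEE [simp]: "contr x (tEE y z) = lE (g (tEE x y)) z"
  unfolding contr_def by (rule tmap_tensor[OF tensor_EE balanced_contr])

lemma additive_contr: "additive (contr x)"
  unfolding contr_def by (rule additive_tmap[OF tensor_EE balanced_contr])

lemmas contr_add = additive.add[OF additive_contr]
lemmas contr_diff = additive.diff[OF additive_contr]

lemma contr_add_left: "contr (x + x') \<tau> = contr x \<tau> + contr x' \<tau>"
  by (rule is_tensor_additive_eq[OF tensor_EE, where f = "contr (x + x')"])
    (simp_all add: additive_def contr_add tEE_add_left g_add E.lscale_add_scalar)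

lemma contr_balanced: "contr (rE x a) \<tau> = contr x (lT a \<tau>)"
  by (rule is_tensor_additive_eq[OF tensor_EE, where f = "contr (rE x a)"])
    (simp_all add: additive_def contr_add T.lscale_add lT_tEE tEE_balanced)

lemma contr_rT: "contr x (rT \<tau> a) = rE (contr x \<tau>) a"
  by (rule is_tensor_additive_eq[OF tensor_EE, where f = "\<lambda>\<tau>. contr x (rT \<tau> a)"])
    (simp_all add: additive_def contr_add T.rscale_add E.rscale_add rT_tEE E.lscale_rscale)

lemma balanced_contr_tES: "balanced UNIV UNIV UNIV rE lT contr"
  by (simp add: balanced_UNIV_iff contr_add_left contr_add contr_balanced)

lemma gid_eq_tmap: "gid lE tEE tES g = tmap tES contr"
  by (simp add: gid_def contr_def[abs_def])

lemma gid_tES [simp]: "gid lE tEE tES g (tES x \<tau>) = contr x \<tau>"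
  by (simp add: gid_eq_tmap tmap_tensor[OF tensor_ES balanced_contr_tES])

lemma additive_gid: "additive (gid lE tEE tES g)"
  by (simp add: gid_eq_tmap additive_tmap[OF tensor_ES balanced_contr_tES])

lemma tens_r_tEE [simp]: "tens_r tEE tES (tEE x y) z = tES x (tEE y z)"
  unfolding tens_r_def
  by (rule tmap_tensor[OF tensor_EE])
    (simp add: balanced_UNIV_iff tES_add_left tEE_add_left tES_add_right tES_balanced lT_tEE)

lemma additive_tens_r: "additive (\<lambda>\<tau>. tens_r tEE tES \<tau> z)"
  unfolding tens_r_def
  by (rule additive_tmap[OF tensor_EE])
    (simp add: balanced_UNIV_iff tES_add_left tEE_add_left tES_add_right tES_balanced lT_tEE)

definition rcontr :: "'t \<Rightarrow> 'e \<Rightarrow> 'e" where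
  "rcontr \<tau> \<eta> = tmap tEE (\<lambda>x y. rE x (g (tEE y \<eta>))) \<tau>"

lemma balanced_rcontr: "balanced UNIV UNIV UNIV rE lE (\<lambda>x y. rE x (g (tEE y \<eta>)))"
  by (simp add: balanced_UNIV_iff E.rscale_add tEE_add_left g_add E.rscale_add_scalar
      g_tEE_lscale E.rscale_mult)

lemma rcontr_tEE [simp]: "rcontr (tEE x y) \<eta> = rE x (g (tEE y \<eta>))"
  unfolding rcontr_def by (rule tmap_tensor[OF tensor_EE balanced_rcontr])

lemma additive_rcontr: "additive (\<lambda>\<tau>. rcontr \<tau> \<eta>)"
  unfolding rcontr_def by (rule additive_tmap[OF tensor_EE balanced_rcontr])

lemmas rcontr_add = additive.add[OF additive_rcontr]
lemmas rcontr_zero [simp] = additive.zero[OF additive_rcontr]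
lemmas rcontr_diff = additive.diff[OF additive_rcontr]
lemmas rcontr_sum = additive.sum[OF additive_rcontr]

lemma rcontr_rscale: "rcontr \<tau> (rE \<eta> a) = rE (rcontr \<tau> \<eta>) a"
  by (rule is_tensor_additive_eq[OF tensor_EE, where f = "\<lambda>\<tau>. rcontr \<tau> (rE \<eta> a)"])
    (simp_all add: additive_def rcontr_add E.rscale_add g_tEE_rscale E.rscale_mult)

lemma additive_rcontr_right: "additive (rcontr \<tau>)"
proof
  fix \<eta> \<eta>'
  show "rcontr \<tau> (\<eta> + \<eta>') = rcontr \<tau> \<eta> + rcontr \<tau> \<eta>'"
    by (rule is_tensor_additive_eq[OF tensor_EE, where f = "\<lambda>\<tau>. rcontr \<tau> (\<eta> + \<eta>')"])
      (simp_all add: additive_def rcontr_add tEE_add_right g_add E.rscale_add_scalar algebra_simps)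
qed

definition twisted_contr :: "'t \<Rightarrow> 'e \<Rightarrow> 'e" where
  "twisted_contr \<tau> \<eta> = gid lE tEE tES g (sigma23 \<sigma> tES (tens_r tEE tES \<tau> \<eta>))"

lemma compatible_Z_iff:
  "compatible_Z lE rE d0 tEE tES \<sigma> g nabla \<longleftrightarrow>
    (\<forall>\<omega>\<in>Z. \<forall>\<eta>\<in>Z. twisted_contr (nabla \<omega>) \<eta> + contr \<omega> (nabla \<eta>) = d0 (g (tEE \<omega> \<eta>)))"
  by (simp add: compatible_Z_def twisted_contr_def)

lemmas d0_add = additive.add[OF additive_d0]
lemmas d1_add = additive.add[OF additive_d1]

lemma d0_one: "d0 1 = 0"
  using d0_mult[of 1 1] by simp

lemma d0_iota: "d0 (\<iota> c) = 0"
  using d0_iota_mult[of c 1] by (simp add: d0_one)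

definition Q_inv :: "'f \<Rightarrow> 't" where
  "Q_inv = the_inv_into Fs W"

lemma Q_inv_in: "Q_inv \<theta> \<in> Fs"
  unfolding Q_inv_def using wedge_F_bij by (simp add: bij_betw_def the_inv_into_into)

lemma W_Q_inv [simp]: "W (Q_inv \<theta>) = \<theta>"
  unfolding Q_inv_def using wedge_F_bij by (simp add: f_the_inv_into_f_bij_betw)

lemma Q_inv_eqI: "k \<in> Fs \<Longrightarrow> W k = \<theta> \<Longrightarrow> Q_inv \<theta> = k"
  unfolding Q_inv_def using wedge_F_bij by (auto simp: bij_betw_def the_inv_into_f_eq)

lemma Q_inv_add: "Q_inv (\<theta> + \<theta>') = Q_inv \<theta> + Q_inv \<theta>'"
  by (rule Q_inv_eqI) (simp_all add: F_add Q_inv_in W_add)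

lemma Q_inv_rscale: "Q_inv (rF \<theta> a) = rT (Q_inv \<theta>) a"
  by (rule Q_inv_eqI) (simp_all add: F_rscale Q_inv_in W_rT)

section \<open>Central frames\<close>

lemma central_dual_basis:
  obtains J :: "(nat \<times> 'e \<times> 'a) set" and \<xi> :: "nat \<times> 'e \<times> 'a \<Rightarrow> 'e" and \<psi>
  where "finite J" "\<And>j. j \<in> J \<Longrightarrow> \<xi> j \<in> Z" "\<And>j. j \<in> J \<Longrightarrow> additive (\<psi> j)"
    "\<And>j x a. j \<in> J \<Longrightarrow> \<psi> j (rE x a) = \<psi> j x * a" "\<And>x. (\<Sum>j\<in>J. rE (\<xi> j) (\<psi> j x)) = x"
proof -
  obtain \<phi> :: "nat \<Rightarrow> 'e \<Rightarrow> 'a" and e :: "nat \<Rightarrow> 'e" and n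
    where \<phi>: "\<And>k. additive (\<phi> k)" "\<And>k x a. \<phi> k (rE x a) = \<phi> k x * a"
      and e: "\<And>x. x = (\<Sum>k<n. rE (e k) (\<phi> k x))"
    by (rule fg_projective_right_dual_basis[OF fg_projective]) blast
  have "\<forall>k. \<exists>y. Poly_Mapping.keys y \<subseteq> Z \<times> UNIV \<and> lift2 rE y = e k"
    using is_tensor_surj[OF central_tensor] by blast
  then obtain Y where Y: "\<And>k. Poly_Mapping.keys (Y k) \<subseteq> Z \<times> UNIV" "\<And>k. lift2 rE (Y k) = e k"
    by metis
  define c where "c k q = zmult (Poly_Mapping.lookup (Y k) q) (snd q)" for k q
  have e_central: "e k = (\<Sum>q\<in>Poly_Mapping.keys (Y k). rE (fst q) (c k q))" for k
    unfolding Y(2)[symmetric] lift2_def c_def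
    by (simp add: additive.zmult[OF E.additive_rscale_scalar])
  define J where "J = Sigma {..<n} (\<lambda>k. Poly_Mapping.keys (Y k))"
  define \<xi> :: "nat \<times> 'e \<times> 'a \<Rightarrow> 'e" where "\<xi> j = fst (snd j)" for j
  define \<psi> where "\<psi> j x = c (fst j) (snd j) * \<phi> (fst j) x" for j x
  show thesis
  proof
    show "finite J"
      by (simp add: J_def)
    show "\<xi> j \<in> Z" if "j \<in> J" for j
      using that Y(1) by (force simp: J_def \<xi>_def)
    show "additive (\<psi> j)" for j
      using \<phi>(1) by (simp add: additive_def \<psi>_def distrib_left)
    show "\<psi> j (rE x a) = \<psi> j x * a" for j x a
      by (simp add: \<psi>_def \<phi>(2) mult.assoc)
    fix x
    have "x = (\<Sum>k<n. \<Sum>q\<in>Poly_Mapping.keys (Y k). rE (fst q) (c k q * \<phi> k x))"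
      by (subst e) (simp add: e_central E.rscale_sum E.rscale_mult)
    also have "\<dots> = (\<Sum>j\<in>J. rE (\<xi> j) (\<psi> j x))"
      unfolding J_def \<xi>_def \<psi>_def by (subst sum.Sigma) (auto simp: split_beta)
    finally show "(\<Sum>j\<in>J. rE (\<xi> j) (\<psi> j x)) = x" ..
  qed
qed

lemma metric_represents:
  assumes "additive f" "\<And>x a. f (rE x a) = f x * a"
  obtains e where "\<And>x. g (tEE e x) = f x"
proof -
  have "f \<in> right_dual rE"
    using assms by (simp add: right_dual_def addhom_eq_additive)
  then obtain e where "f = (\<lambda>x. g (tEE e x))"
    using g_nondegenerate unfolding bij_betw_def by auto
  then show thesis
    using that by simp
qed

end

locale levi_civita_frame = levi_civita +
  fixes J :: "'j set" and \<xi> \<xi>' \<psi>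
  assumes finite_J: "finite J"
    and frame_central: "j \<in> J \<Longrightarrow> \<xi> j \<in> bcenter lE rE"
    and additive_coord: "j \<in> J \<Longrightarrow> additive (\<psi> j)"
    and coord_rscale: "j \<in> J \<Longrightarrow> \<psi> j (rE x a) = \<psi> j x * a"
    and frame_expansion: "(\<Sum>j\<in>J. rE (\<xi> j) (\<psi> j x)) = x"
    and coord_metric: "j \<in> J \<Longrightarrow> g (tEE (\<xi>' j) x) = \<psi> j x"

lemma (in levi_civita) levi_civita_frame_exists:
  obtains J :: "(nat \<times> 'e \<times> 'a) set" and \<xi> \<xi>' \<psi>
  where "levi_civita_frame \<iota> lE rE rF d0 d1 wedge tEE lT rT tES Fs g J \<xi> \<xi>' \<psi>"
proof -
  obtain J :: "(nat \<times> 'e \<times> 'a) set" and \<xi> \<psi> where frame: "finite J" "\<And>j. j \<in> J \<Longrightarrow> \<xi> j \<in> Z"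
    "\<And>j. j \<in> J \<Longrightarrow> additive (\<psi> j)" "\<And>j x a. j \<in> J \<Longrightarrow> \<psi> j (rE x a) = \<psi> j x * a"
    "\<And>x. (\<Sum>j\<in>J. rE (\<xi> j) (\<psi> j x)) = x"
    by (rule central_dual_basis) blast
  have "\<exists>e. \<forall>x. g (tEE e x) = \<psi> j x" if "j \<in> J" for j
    using metric_represents[of "\<psi> j"] frame(3,4) that by metis
  then obtain \<xi>' where "\<And>j x. j \<in> J \<Longrightarrow> g (tEE (\<xi>' j) x) = \<psi> j x"
    by metis
  with frame show thesis
    by (intro that[of J \<xi> \<xi>' \<psi>] levi_civita_frame.intro levi_civita_axioms
        levi_civita_frame_axioms.intro) simp_all
qed

context levi_civita_frame
begin

lemma E_additive_eq:
  assumes "additive f" "additive f'"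
    and "\<And>j c. j \<in> J \<Longrightarrow> f (rE (\<xi> j) c) = f' (rE (\<xi> j) c)"
  shows "f x = f' x"
proof -
  have "f x = (\<Sum>j\<in>J. f (rE (\<xi> j) (\<psi> j x)))"
    using additive.sum[OF assms(1)] frame_expansion by metis
  also have "\<dots> = (\<Sum>j\<in>J. f' (rE (\<xi> j) (\<psi> j x)))"
    using assms(3) by simp
  also have "\<dots> = f' x"
    using additive.sum[OF assms(2)] frame_expansion by metis
  finally show ?thesis .
qed

lemma acenter_lscale:
  assumes "z \<in> acenter"
  shows "lE z x = rE x z"
proof (rule E_additive_eq[where f = "lE z" and f' = "\<lambda>x. rE x z"])
  fix j c
  assume "j \<in> J"
  then have "lE z (rE (\<xi> j) c) = rE (\<xi> j) (z * c)"
    by (simp add: E.lscale_rscale central_lscale frame_central E.rscale_mult)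
  also have "\<dots> = rE (rE (\<xi> j) c) z"
    using assms by (simp add: acenter_def E.rscale_mult)
  finally show "lE z (rE (\<xi> j) c) = rE (rE (\<xi> j) c) z" .
qed (simp_all add: additive_def E.lscale_add E.rscale_add)

lemma T_additive_eq:
  assumes f: "additive f" and f': "additive f'"
    and gen: "\<And>u v c. u \<in> Z \<Longrightarrow> v \<in> Z \<Longrightarrow> f (rT (tEE u v) c) = f' (rT (tEE u v) c)"
  shows "f \<tau> = f' \<tau>"
proof (rule is_tensor_additive_eq[OF tensor_EE f f'])
  have central_left: "f (tEE u y) = f' (tEE u y)" if "u \<in> Z" for u y
    by (rule E_additive_eq[where f = "\<lambda>y. f (tEE u y)" and f' = "\<lambda>y. f' (tEE u y)"])
      (use f f' gen[OF that frame_central] in \<open>simp_all add: additive_def tEE_add_right rT_tEE\<close>)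
  show "f (tEE x y) = f' (tEE x y)" for x y
    by (rule E_additive_eq[where f = "\<lambda>x. f (tEE x y)" and f' = "\<lambda>x. f' (tEE x y)"])
      (use f f' central_left[OF frame_central]
        in \<open>simp_all add: additive_def tEE_add_left tEE_balanced\<close>)
qed

lemma sigma_tEE_central_right:
  assumes "\<eta> \<in> Z"
  shows "\<sigma> (tEE x \<eta>) = tEE \<eta> x"
proof (rule E_additive_eq[where f = "\<lambda>x. \<sigma> (tEE x \<eta>)" and f' = "tEE \<eta>"])
  fix j c
  assume j: "j \<in> J"
  have "\<sigma> (tEE (rE (\<xi> j) c) \<eta>) = \<sigma> (rT (tEE (\<xi> j) \<eta>) c)"
    using assms by (simp add: tEE_balanced central_lscale rT_tEE)
  also have "\<dots> = tEE \<eta> (rE (\<xi> j) c)"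
    using assms j by (subst sigma_rT) (simp add: sigma_central frame_central rT_tEE)
  finally show "\<sigma> (tEE (rE (\<xi> j) c) \<eta>) = tEE \<eta> (rE (\<xi> j) c)" .
qed (simp_all add: additive_def tEE_add_left tEE_add_right sigma_add)

lemma g_tEE_central_swap: "\<eta> \<in> Z \<Longrightarrow> g (tEE \<eta> x) = g (tEE x \<eta>)"
  by (metis g_sigma sigma_tEE_central_right)

lemma sigma_lT: "\<sigma> (lT a \<tau>) = lT a (\<sigma> \<tau>)"
proof (rule T_additive_eq[where f = "\<lambda>\<tau>. \<sigma> (lT a \<tau>)" and f' = "\<lambda>\<tau>. lT a (\<sigma> \<tau>)"])
  fix u v c
  assume uv: "u \<in> Z" "v \<in> Z"
  have lT_central: "lT b (tEE x y) = rT (tEE x y) b" if "x \<in> Z" "y \<in> Z" for b x y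
    using that by (simp add: lT_tEE central_lscale tEE_balanced rT_tEE)
  show "\<sigma> (lT a (rT (tEE u v) c)) = lT a (\<sigma> (rT (tEE u v) c))"
    using uv by (simp add: T.lscale_rscale lT_central sigma_rT sigma_central)
qed (simp_all add: additive_def T.lscale_add sigma_add)

lemma balanced_sigma23: "balanced UNIV UNIV UNIV rE lT (\<lambda>x \<tau>. tES x (\<sigma> \<tau>))"
  by (simp add: balanced_UNIV_iff tES_add_left tES_add_right sigma_add tES_balanced sigma_lT)

lemma twisted_contr_tEE: "twisted_contr (tEE x y) \<eta> = contr x (\<sigma> (tEE y \<eta>))"
  unfolding twisted_contr_def sigma23_def
  by (simp add: tmap_tensor[OF tensor_ES balanced_sigma23])

lemma additive_twisted_contr: "additive (\<lambda>\<tau>. twisted_contr \<tau> \<eta>)"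
proof -
  have "additive (sigma23 \<sigma> tES)"
    unfolding sigma23_def by (rule additive_tmap[OF tensor_ES balanced_sigma23])
  then show ?thesis
    using additive_tens_r additive_gid by (simp add: additive_def twisted_contr_def)
qed

lemmas twisted_contr_add = additive.add[OF additive_twisted_contr]
lemmas twisted_contr_diff = additive.diff[OF additive_twisted_contr]

lemma twisted_contr_rscale: "twisted_contr \<tau> (rE \<eta> a) = rE (twisted_contr \<tau> \<eta>) a"
  by (rule is_tensor_additive_eq[OF tensor_EE, where f = "\<lambda>\<tau>. twisted_contr \<tau> (rE \<eta> a)"])
    (simp_all add: additive_twisted_contr additive_def twisted_contr_add E.rscale_add
      twisted_contr_tEE flip: rT_tEE add: sigma_rT contr_rT)

lemma twisted_contr_add_right: "twisted_contr \<tau> (\<eta> + \<eta>') = twisted_contr \<tau> \<eta> + twisted_contr \<tau> \<eta>'"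
  by (rule is_tensor_additive_eq[OF tensor_EE, where f = "\<lambda>\<tau>. twisted_contr \<tau> (\<eta> + \<eta>')"])
    (simp_all add: additive_twisted_contr additive_def twisted_contr_add twisted_contr_tEE
      tEE_add_right sigma_add contr_add algebra_simps)

lemma twisted_contr_central: "\<eta> \<in> Z \<Longrightarrow> twisted_contr \<tau> \<eta> = contr \<eta> \<tau>"
  by (rule is_tensor_additive_eq[OF tensor_EE additive_twisted_contr additive_contr])
    (simp add: twisted_contr_tEE sigma_tEE_central_right g_tEE_central_swap)

lemma contr_central_sigma:
  assumes "\<eta> \<in> Z"
  shows "contr \<eta> \<tau> = rcontr (\<sigma> \<tau>) \<eta>"
proof (rule T_additive_eq[where f = "contr \<eta>" and f' = "\<lambda>\<tau>. rcontr (\<sigma> \<tau>) \<eta>"])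
  fix u v c
  assume "u \<in> Z" "v \<in> Z"
  with assms show "contr \<eta> (rT (tEE u v) c) = rcontr (\<sigma> (rT (tEE u v) c)) \<eta>"
    by (simp add: contr_rT central_lscale g_tEE_central_swap sigma_rT_central
        g_tEE_rscale_left E.rscale_mult)
qed (simp_all add: additive_def contr_add sigma_add rcontr_add)

lemma g_rcontr_sigma:
  assumes "\<eta> \<in> Z" "\<zeta> \<in> Z"
  shows "g (tEE (rcontr (\<sigma> \<tau>) \<eta>) \<zeta>) = g (tEE (rcontr \<tau> \<zeta>) \<eta>)"
proof (rule T_additive_eq[where f = "\<lambda>\<tau>. g (tEE (rcontr (\<sigma> \<tau>) \<eta>) \<zeta>)"])
  fix u v c
  assume uv: "u \<in> Z" "v \<in> Z"
  have "g (tEE (rcontr (\<sigma> (rT (tEE u v) c)) \<eta>) \<zeta>) = g (tEE v \<zeta>) * (g (tEE u \<eta>) * c)"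
    using uv assms by (simp add: sigma_rT_central g_tEE_rscale_left)
  also have "\<dots> = g (tEE u \<eta>) * (g (tEE v \<zeta>) * c)"
    using g_tEE_central_commute[OF uv(1) assms(1), of "g (tEE v \<zeta>)"]
    by (simp only: mult.assoc[symmetric])
  also have "\<dots> = g (tEE (rcontr (rT (tEE u v) c) \<zeta>) \<eta>)"
    using uv assms by (simp add: rT_tEE g_tEE_rscale_left)
  finally show "g (tEE (rcontr (\<sigma> (rT (tEE u v) c)) \<eta>) \<zeta>) = g (tEE (rcontr (rT (tEE u v) c) \<zeta>) \<eta>)" .
qed (simp_all add: additive_def sigma_add rcontr_add tEE_add_left g_add)

lemma tEE_frame_expansion: "\<exists>X. \<tau> = (\<Sum>j\<in>J. tEE (X j) (\<xi> j))"
  using tensor_EE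
proof (induction \<tau> rule: is_tensor_induct)
  case zero
  show ?case
    by (rule exI[of _ "\<lambda>_. 0"]) simp
next
  case (add a b)
  then obtain X Y where "a = (\<Sum>j\<in>J. tEE (X j) (\<xi> j))" "b = (\<Sum>j\<in>J. tEE (Y j) (\<xi> j))"
    by blast
  then show ?case
    by (intro exI[of _ "\<lambda>j. X j + Y j"]) (simp add: tEE_add_left sum.distrib)
next
  case (uminus a)
  then obtain X where "a = (\<Sum>j\<in>J. tEE (X j) (\<xi> j))"
    by blast
  then show ?case
    by (intro exI[of _ "\<lambda>j. - X j"]) (simp add: tEE_minus_left sum_negf)
next
  case (tensor x y)
  have "tEE x y = (\<Sum>j\<in>J. tEE x (rE (\<xi> j) (\<psi> j y)))"
    by (simp flip: tEE_sum_right add: frame_expansion)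
  also have "\<dots> = (\<Sum>j\<in>J. tEE (rE x (\<psi> j y)) (\<xi> j))"
    by (simp add: tEE_rscale_central frame_central)
  finally show ?case
    by (intro exI[of _ "\<lambda>j. rE x (\<psi> j y)"])
qed

lemma rcontr_eq_zero:
  assumes "\<And>\<eta>. rcontr \<tau> \<eta> = 0"
  shows "\<tau> = 0"
proof -
  obtain X where X: "\<tau> = (\<Sum>j\<in>J. tEE (X j) (\<xi> j))"
    using tEE_frame_expansion by blast
  have coeff: "(\<Sum>j\<in>J. rE (X j) (\<psi> k (\<xi> j))) = 0" if k: "k \<in> J" for k
  proof -
    have "g (tEE (\<xi> j) (\<xi>' k)) = \<psi> k (\<xi> j)" if "j \<in> J" for j
      using that k by (metis g_tEE_central_swap frame_central coord_metric)
    then have "(\<Sum>j\<in>J. rE (X j) (\<psi> k (\<xi> j))) = rcontr \<tau> (\<xi>' k)"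
      by (simp add: X rcontr_sum cong: sum.cong)
    then show ?thesis
      using assms by simp
  qed
  have "\<tau> = (\<Sum>j\<in>J. tEE (X j) (\<Sum>k\<in>J. rE (\<xi> k) (\<psi> k (\<xi> j))))"
    by (simp add: X frame_expansion)
  also have "\<dots> = (\<Sum>j\<in>J. \<Sum>k\<in>J. tEE (rE (X j) (\<psi> k (\<xi> j))) (\<xi> k))"
    by (simp add: tEE_sum_right tEE_rscale_central frame_central cong: sum.cong)
  also have "\<dots> = (\<Sum>k\<in>J. tEE (\<Sum>j\<in>J. rE (X j) (\<psi> k (\<xi> j))) (\<xi> k))"
    by (subst sum.swap) (simp add: tEE_sum_left)
  also have "\<dots> = 0"
    by (simp add: coeff)
  finally show ?thesis .
qed

lemma rcontr_central_eq:
  assumes "\<And>\<eta>. \<eta> \<in> Z \<Longrightarrow> rcontr \<tau> \<eta> = rcontr \<tau>' \<eta>"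
  shows "\<tau> = \<tau>'"
proof -
  have "rcontr (\<tau> - \<tau>') \<eta> = 0" for \<eta>
    by (rule E_additive_eq[where f' = "\<lambda>_. 0", OF additive_rcontr_right])
      (simp_all add: additive_def rcontr_rscale rcontr_diff assms frame_central)
  then show ?thesis
    using rcontr_eq_zero[of "\<tau> - \<tau>'"] by simp
qed

lemma g_tEE_central_inj:
  assumes "\<And>\<zeta>. \<zeta> \<in> Z \<Longrightarrow> g (tEE x \<zeta>) = g (tEE y \<zeta>)"
  shows "x = y"
proof (rule g_tEE_inj)
  show "g (tEE x \<zeta>) = g (tEE y \<zeta>)" for \<zeta>
    by (rule E_additive_eq[where f = "\<lambda>\<zeta>. g (tEE x \<zeta>)"])
      (simp_all add: additive_def tEE_add_right g_add g_tEE_rscale assms frame_central)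
qed

lemma twisted_contr_sigma_fixed:
  "\<sigma> \<tau> = \<tau> \<Longrightarrow> \<eta> \<in> Z \<Longrightarrow> twisted_contr \<tau> \<eta> = rcontr \<tau> \<eta>"
  by (simp add: twisted_contr_central contr_central_sigma)

lemma contr_sigma_fixed: "\<sigma> \<tau> = \<tau> \<Longrightarrow> \<eta> \<in> Z \<Longrightarrow> contr \<eta> \<tau> = rcontr \<tau> \<eta>"
  by (simp add: contr_central_sigma)

section \<open>The Levi-Civita connection\<close>

definition grassmann where
  "grassmann x = (\<Sum>j\<in>J. tEE (\<xi> j) (d0 (\<psi> j x)))"

lemma grassmann_add: "grassmann (x + y) = grassmann x + grassmann y"
  unfolding grassmann_def
  by (simp add: additive.add[OF additive_coord] d0_add tEE_add_right sum.distrib cong: sum.cong)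

lemma grassmann_leibniz: "grassmann (rE x a) = rT (grassmann x) a + tEE x (d0 a)"
proof -
  have "grassmann (rE x a) = (\<Sum>j\<in>J. rT (tEE (\<xi> j) (d0 (\<psi> j x))) a + tEE (rE (\<xi> j) (\<psi> j x)) (d0 a))"
    unfolding grassmann_def
    by (rule sum.cong) (simp_all add: coord_rscale d0_mult tEE_add_right rT_tEE tEE_balanced)
  also have "\<dots> = rT (grassmann x) a + tEE (\<Sum>j\<in>J. rE (\<xi> j) (\<psi> j x)) (d0 a)"
    by (simp add: sum.distrib grassmann_def T.rscale_sum tEE_sum_left)
  finally show ?thesis
    by (simp add: frame_expansion)
qed

definition torsion where
  "torsion nabla x = W (nabla x) + d1 x"

lemma torsion_rscale:
  assumes "nabla (rE x a) = rT (nabla x) a + tEE x (d0 a)"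
  shows "torsion nabla (rE x a) = rF (torsion nabla x) a"
  using assms by (simp add: torsion_def W_add W_rT d1_rscale F.rscale_add)

definition torsion_free_conn where
  "torsion_free_conn x = grassmann x - Q_inv (torsion grassmann x)"

lemma torsion_free_conn_add:
  "torsion_free_conn (x + y) = torsion_free_conn x + torsion_free_conn y"
  by (simp add: torsion_free_conn_def torsion_def grassmann_add W_add d1_add Q_inv_add
      algebra_simps)

lemma torsion_free_conn_leibniz:
  "torsion_free_conn (rE x a) = rT (torsion_free_conn x) a + tEE x (d0 a)"
  by (simp add: torsion_free_conn_def torsion_rscale grassmann_leibniz Q_inv_rscale T.rscale_diff)

lemma torsion_free_conn_torsion: "W (torsion_free_conn x) + d1 x = 0"
  by (simp add: torsion_free_conn_def W_diff torsion_def)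

definition defect where
  "defect \<omega> \<eta> =
    d0 (g (tEE \<omega> \<eta>)) - twisted_contr (torsion_free_conn \<omega>) \<eta> - contr \<omega> (torsion_free_conn \<eta>)"

lemma defect_add_left: "defect (\<omega> + \<omega>') \<eta> = defect \<omega> \<eta> + defect \<omega>' \<eta>"
  by (simp add: defect_def tEE_add_left g_add d0_add twisted_contr_add torsion_free_conn_add
      contr_add_left algebra_simps)

lemma defect_add_right: "defect \<omega> (\<eta> + \<eta>') = defect \<omega> \<eta> + defect \<omega> \<eta>'"
  by (simp add: defect_def tEE_add_right g_add d0_add twisted_contr_add_right torsion_free_conn_add
      contr_add algebra_simps)

lemma additive_defect: "additive (defect \<omega>)"
  by (simp add: additive_def defect_add_right)

lemma defect_rscale: "defect \<omega> (rE \<eta> a) = rE (defect \<omega> \<eta>) a"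
proof -
  have "defect \<omega> (rE \<eta> a) = (rE (d0 (g (tEE \<omega> \<eta>))) a + lE (g (tEE \<omega> \<eta>)) (d0 a))
      - rE (twisted_contr (torsion_free_conn \<omega>) \<eta>) a
      - (rE (contr \<omega> (torsion_free_conn \<eta>)) a + lE (g (tEE \<omega> \<eta>)) (d0 a))"
    by (simp add: defect_def g_tEE_rscale d0_mult twisted_contr_rscale torsion_free_conn_leibniz
        contr_add contr_rT)
  then show ?thesis
    by (simp add: defect_def E.rscale_diff)
qed

lemma defect_central_sym: "\<omega> \<in> Z \<Longrightarrow> \<eta> \<in> Z \<Longrightarrow> defect \<omega> \<eta> = defect \<eta> \<omega>"
  by (simp add: defect_def twisted_contr_central g_tEE_central_swap)

lemma defect_rscale_acenter_left:
  assumes "\<omega> \<in> Z" "z \<in> acenter"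
  shows "defect (rE \<omega> z) \<eta> = rE (defect \<omega> \<eta>) z"
proof (rule E_additive_eq[where f = "defect (rE \<omega> z)" and f' = "\<lambda>\<eta>. rE (defect \<omega> \<eta>) z"])
  fix j c
  assume j: "j \<in> J"
  have "defect (rE \<omega> z) (rE (\<xi> j) c) = rE (defect (\<xi> j) (rE \<omega> z)) c"
    using j assms
    by (simp add: defect_rscale defect_central_sym central_rscale_acenter frame_central)
  also have "\<dots> = rE (defect \<omega> (\<xi> j)) (z * c)"
    using j assms by (simp add: defect_rscale defect_central_sym frame_central E.rscale_mult)
  also have "\<dots> = rE (defect \<omega> (rE (\<xi> j) c)) z"
    using assms(2) by (simp add: acenter_def defect_rscale E.rscale_mult)
  finally show "defect (rE \<omega> z) (rE (\<xi> j) c) = rE (defect \<omega> (rE (\<xi> j) c)) z" .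
qed (simp_all add: additive_defect additive_def defect_add_right E.rscale_add)

definition koszul where
  "koszul \<omega> \<eta> \<zeta> = (g (tEE (defect \<omega> \<eta>) \<zeta>) + g (tEE (defect \<omega> \<zeta>) \<eta>) - g (tEE (defect \<eta> \<zeta>) \<omega>)) * half"

lemma koszul_add_right: "koszul \<omega> \<eta> (x + y) = koszul \<omega> \<eta> x + koszul \<omega> \<eta> y"
  by (simp add: koszul_def defect_add_right tEE_add_right tEE_add_left g_add algebra_simps)

lemma koszul_rscale_right:
  assumes "\<omega> \<in> Z" "\<eta> \<in> Z"
  shows "koszul \<omega> \<eta> (rE x a) = koszul \<omega> \<eta> x * a"
proof -
  have "koszul \<omega> \<eta> (rE x a) = (g (tEE (defect \<omega> \<eta>) x) + g (tEE (defect \<omega> x) \<eta>)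
      - g (tEE (defect \<eta> x) \<omega>)) * a * half"
    using assms by (simp add: koszul_def g_tEE_rscale defect_rscale g_tEE_rscale_left algebra_simps)
  then show ?thesis
    by (simp add: koszul_def mult.assoc half_commute)
qed

lemma koszul_central_sym: "\<omega> \<in> Z \<Longrightarrow> \<eta> \<in> Z \<Longrightarrow> \<zeta> \<in> Z \<Longrightarrow> koszul \<omega> \<eta> \<zeta> = koszul \<omega> \<zeta> \<eta>"
  by (simp add: koszul_def defect_central_sym algebra_simps)

definition koszul_rep where
  "koszul_rep \<omega> \<eta> = the_inv_into UNIV (\<lambda>e x. g (tEE e x)) (koszul \<omega> \<eta>)"

lemma g_koszul_rep:
  assumes "\<omega> \<in> Z" "\<eta> \<in> Z"
  shows "g (tEE (koszul_rep \<omega> \<eta>) \<zeta>) = koszul \<omega> \<eta> \<zeta>"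
proof -
  have "koszul \<omega> \<eta> \<in> right_dual rE"
    using assms by (simp add: right_dual_def addhom_def koszul_add_right koszul_rscale_right)
  then have "(\<lambda>x. g (tEE (koszul_rep \<omega> \<eta>) x)) = koszul \<omega> \<eta>"
    unfolding koszul_rep_def using f_the_inv_into_f_bij_betw[OF g_nondegenerate] by simp
  then show ?thesis
    by (rule fun_cong)
qed

lemma koszul_rep_add_sym:
  assumes "\<omega> \<in> Z" "\<eta> \<in> Z"
  shows "koszul_rep \<omega> \<eta> + koszul_rep \<eta> \<omega> = defect \<omega> \<eta>"
proof (rule g_tEE_inj)
  fix \<zeta>
  have "g (tEE (koszul_rep \<omega> \<eta> + koszul_rep \<eta> \<omega>) \<zeta>) = g (tEE (defect \<omega> \<eta>) \<zeta>) * (half + half)"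
    using assms
    by (simp add: tEE_add_left g_add g_koszul_rep koszul_def defect_central_sym algebra_simps)
  then show "g (tEE (koszul_rep \<omega> \<eta> + koszul_rep \<eta> \<omega>) \<zeta>) = g (tEE (defect \<omega> \<eta>) \<zeta>)"
    by (simp add: half_add_half)
qed

lemma koszul_rep_add_left:
  assumes "\<omega> \<in> Z" "\<omega>' \<in> Z" "\<eta> \<in> Z"
  shows "koszul_rep (\<omega> + \<omega>') \<eta> = koszul_rep \<omega> \<eta> + koszul_rep \<omega>' \<eta>"
  by (rule g_tEE_inj)
    (simp add: assms central_add g_koszul_rep tEE_add_left g_add koszul_def defect_add_left
      tEE_add_right algebra_simps)

lemma koszul_rep_rscale_acenter_left:
  assumes "\<omega> \<in> Z" "z \<in> acenter" "\<eta> \<in> Z"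
  shows "koszul_rep (rE \<omega> z) \<eta> = rE (koszul_rep \<omega> \<eta>) z"
proof (rule g_tEE_inj)
  fix \<zeta>
  have g_acenter: "g (tEE (rE x z) y) = g (tEE x y) * z" for x y
    using assms(2) by (simp add: tEE_balanced acenter_lscale g_tEE_rscale)
  have "g (tEE (koszul_rep (rE \<omega> z) \<eta>) \<zeta>) = (g (tEE (defect \<omega> \<eta>) \<zeta>) + g (tEE (defect \<omega> \<zeta>) \<eta>)
      - g (tEE (defect \<eta> \<zeta>) \<omega>)) * z * half"
    using assms by (simp add: g_koszul_rep central_rscale_acenter koszul_def
        defect_rscale_acenter_left g_acenter g_tEE_rscale algebra_simps)
  also have "\<dots> = g (tEE (rE (koszul_rep \<omega> \<eta>) z) \<zeta>)"
    using assms by (simp add: g_acenter g_koszul_rep koszul_def mult.assoc half_commute)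
  finally show "g (tEE (koszul_rep (rE \<omega> z) \<eta>) \<zeta>) = g (tEE (rE (koszul_rep \<omega> \<eta>) z) \<zeta>)" .
qed

definition correction where
  "correction \<omega> = (\<Sum>j\<in>J. tEE (koszul_rep \<omega> (\<xi> j)) (\<xi>' j))"

lemma rcontr_correction:
  assumes "\<omega> \<in> Z" "\<eta> \<in> Z"
  shows "rcontr (correction \<omega>) \<eta> = koszul_rep \<omega> \<eta>"
proof (rule g_tEE_central_inj)
  fix \<zeta>
  assume \<zeta>: "\<zeta> \<in> Z"
  have pair: "(\<Sum>j\<in>J. g (tEE (f (\<xi> j)) \<nu>) * \<psi> j \<eta>) = g (tEE (f \<eta>) \<nu>)"
    if "\<nu> \<in> Z" "additive f" "\<And>x a. f (rE x a) = rE (f x) a" for f \<nu>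
    using that additive.sum[OF that(2), of "\<lambda>j. rE (\<xi> j) (\<psi> j \<eta>)" J]
    by (simp add: frame_expansion tEE_sum_left g_sum g_tEE_rscale_left)
  have "(\<Sum>j\<in>J. g (tEE (defect \<omega> \<zeta>) (\<xi> j)) * \<psi> j \<eta>) = g (tEE (defect \<omega> \<zeta>) \<eta>)"
    by (simp flip: g_tEE_rscale g_sum tEE_sum_right add: frame_expansion)
  moreover have "(\<Sum>j\<in>J. g (tEE (defect (\<xi> j) \<zeta>) \<omega>) * \<psi> j \<eta>) = g (tEE (defect \<eta> \<zeta>) \<omega>)"
    using pair[OF assms(1), of "defect \<zeta>"] assms \<zeta>
    by (simp add: additive_defect defect_rscale defect_central_sym frame_central
        g_tEE_central_swap[of \<omega>] cong: sum.cong)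
  moreover have "(\<Sum>j\<in>J. g (tEE (defect \<omega> (\<xi> j)) \<zeta>) * \<psi> j \<eta>) = g (tEE (defect \<omega> \<eta>) \<zeta>)"
    using pair[OF \<zeta>, of "defect \<omega>"] by (simp add: additive_defect defect_rscale)
  moreover have "koszul \<omega> (\<xi> j) \<zeta> * \<psi> j \<eta> = (g (tEE (defect \<omega> (\<xi> j)) \<zeta>) * \<psi> j \<eta>
      + g (tEE (defect \<omega> \<zeta>) (\<xi> j)) * \<psi> j \<eta> - g (tEE (defect (\<xi> j) \<zeta>) \<omega>) * \<psi> j \<eta>) * half" for j
    by (simp add: koszul_def algebra_simps half_commute)
  ultimately have "(\<Sum>j\<in>J. koszul \<omega> (\<xi> j) \<zeta> * \<psi> j \<eta>) = koszul \<omega> \<eta> \<zeta>"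
    by (simp add: koszul_def flip: sum_distrib_right add: sum.distrib sum_subtractf)
  then show "g (tEE (rcontr (correction \<omega>) \<eta>) \<zeta>) = g (tEE (koszul_rep \<omega> \<eta>) \<zeta>)"
    using assms \<zeta>
    by (simp add: correction_def rcontr_sum coord_metric tEE_sum_left g_sum g_tEE_rscale_left
        g_koszul_rep frame_central cong: sum.cong)
qed

lemma correction_sigma_fixed:
  assumes "\<omega> \<in> Z"
  shows "\<sigma> (correction \<omega>) = correction \<omega>"
proof (rule rcontr_central_eq)
  fix \<eta>
  assume \<eta>: "\<eta> \<in> Z"
  show "rcontr (\<sigma> (correction \<omega>)) \<eta> = rcontr (correction \<omega>) \<eta>"
  proof (rule g_tEE_central_inj)
    fix \<zeta>
    assume \<zeta>: "\<zeta> \<in> Z"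
    have "g (tEE (rcontr (\<sigma> (correction \<omega>)) \<eta>) \<zeta>) = koszul \<omega> \<zeta> \<eta>"
      using assms \<eta> \<zeta> by (simp add: g_rcontr_sigma rcontr_correction g_koszul_rep)
    also have "\<dots> = g (tEE (rcontr (correction \<omega>) \<eta>) \<zeta>)"
      using assms \<eta> \<zeta> by (simp add: koszul_central_sym rcontr_correction g_koszul_rep)
    finally show "g (tEE (rcontr (\<sigma> (correction \<omega>)) \<eta>) \<zeta>) = g (tEE (rcontr (correction \<omega>) \<eta>) \<zeta>)" .
  qed
qed

lemma correction_add:
  "\<omega> \<in> Z \<Longrightarrow> \<omega>' \<in> Z \<Longrightarrow> correction (\<omega> + \<omega>') = correction \<omega> + correction \<omega>'"
  unfolding correction_def
  by (simp add: koszul_rep_add_left frame_central tEE_add_left sum.distrib cong: sum.cong)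

lemma correction_rscale_acenter:
  assumes "\<omega> \<in> Z" "z \<in> acenter"
  shows "correction (rE \<omega> z) = rT (correction \<omega>) z"
proof -
  have "correction (rE \<omega> z) = (\<Sum>j\<in>J. rT (tEE (koszul_rep \<omega> (\<xi> j)) (\<xi>' j)) z)"
    unfolding correction_def using assms
    by (intro sum.cong) (simp_all add: koszul_rep_rscale_acenter_left frame_central tEE_balanced
        acenter_lscale rT_tEE)
  then show ?thesis
    by (simp add: correction_def T.rscale_sum)
qed

definition correction_ext where
  "correction_ext x = (\<Sum>j\<in>J. rT (correction (\<xi> j)) (\<psi> j x))"

lemma correction_ext_add: "correction_ext (x + y) = correction_ext x + correction_ext y"
  unfolding correction_ext_def
  by (simp add: additive.add[OF additive_coord] T.rscale_add_scalar sum.distrib cong: sum.cong)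

lemma correction_ext_rscale: "correction_ext (rE x a) = rT (correction_ext x) a"
  unfolding correction_ext_def by (simp add: coord_rscale T.rscale_mult T.rscale_sum cong: sum.cong)

text \<open>Condition (1) enters here: both sides are values of one map, balanced over the centre,
  at two representatives of the same element of Z(E) \<otimes>_Z(A) A.\<close>

lemma correction_ext_central:
  assumes "\<omega> \<in> Z"
  shows "correction_ext \<omega> = correction \<omega>"
proof -
  define f where "f \<omega> a = rT (correction \<omega>) a" for \<omega> a
  have "balanced Z UNIV acenter rE (*) f"
    unfolding balanced_def f_def
    by (simp add: correction_add T.rscale_add T.rscale_add_scalar correction_rscale_acenter
        T.rscale_mult)
  moreover define x1 where "x1 = Poly_Mapping.single (\<omega>, 1::'a) (1::int)"
  moreover define x2 where "x2 = (\<Sum>j\<in>J. Poly_Mapping.single (\<xi> j, \<psi> j \<omega>) (1::int))"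
  moreover have "Poly_Mapping.keys x1 \<subseteq> Z \<times> UNIV"
    using assms by (simp add: x1_def)
  moreover have "Poly_Mapping.keys x2 \<subseteq> Z \<times> UNIV"
    using keys_sum[of "\<lambda>j. Poly_Mapping.single (\<xi> j, \<psi> j \<omega>) (1::int)" J] frame_central
    by (auto simp: x2_def)
  moreover have "lift2 rE x1 = lift2 rE x2"
    by (simp add: x1_def x2_def lift2_single lift2_sum frame_expansion)
  ultimately have "lift2 f x1 = lift2 f x2"
    using is_tensor_lift2_eq[OF central_tensor] by blast
  then show ?thesis
    by (simp add: x1_def x2_def lift2_single lift2_sum f_def correction_ext_def)
qed

definition levi_civita_conn where
  "levi_civita_conn x = torsion_free_conn x + correction_ext x"

lemma levi_civita_conn_leibniz:
  "levi_civita_conn (rE x a) = rT (levi_civita_conn x) a + tEE x (d0 a)"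
  by (simp add: levi_civita_conn_def torsion_free_conn_leibniz correction_ext_rscale T.rscale_add)

lemma is_connection_levi_civita_conn: "is_connection \<iota> rE rT d0 tEE levi_civita_conn"
  unfolding is_connection_def addhom_eq_additive
  by (simp add: additive_def levi_civita_conn_def torsion_free_conn_add correction_ext_add
      levi_civita_conn_leibniz[unfolded levi_civita_conn_def] d0_iota)

lemma torsionless_levi_civita_conn: "torsionless tEE wedge d1 levi_civita_conn"
proof -
  have "W (correction_ext x) = 0" for x
    by (simp add: correction_ext_def W_sum W_rT W_sigma_fixed correction_sigma_fixed frame_central
        cong: sum.cong)
  then show ?thesis
    using torsion_free_conn_torsion
    by (simp add: torsionless_def levi_civita_conn_def W_add algebra_simps)
qed

lemma compatible_levi_civita_conn: "compatible_Z lE rE d0 tEE tES \<sigma> g levi_civita_conn"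
  unfolding compatible_Z_iff
proof (intro ballI)
  fix \<omega> \<eta>
  assume \<omega>: "\<omega> \<in> Z" and \<eta>: "\<eta> \<in> Z"
  have "twisted_contr (levi_civita_conn \<omega>) \<eta>
      = twisted_contr (torsion_free_conn \<omega>) \<eta> + koszul_rep \<omega> \<eta>"
    using \<omega> \<eta> by (simp add: levi_civita_conn_def twisted_contr_add correction_ext_central
        twisted_contr_sigma_fixed correction_sigma_fixed rcontr_correction)
  moreover have "contr \<omega> (levi_civita_conn \<eta>) = contr \<omega> (torsion_free_conn \<eta>) + koszul_rep \<eta> \<omega>"
    using \<omega> \<eta> by (simp add: levi_civita_conn_def contr_add correction_ext_central
        contr_sigma_fixed correction_sigma_fixed rcontr_correction)
  ultimately show "twisted_contr (levi_civita_conn \<omega>) \<eta> + contr \<omega> (levi_civita_conn \<eta>)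
      = d0 (g (tEE \<omega> \<eta>))"
    using koszul_rep_add_sym[OF \<omega> \<eta>] by (simp add: defect_def algebra_simps)
qed

lemma torsionless_connection_diff:
  assumes "is_connection \<iota> rE rT d0 tEE nabla1" "torsionless tEE wedge d1 nabla1"
    and "is_connection \<iota> rE rT d0 tEE nabla2" "torsionless tEE wedge d1 nabla2"
  shows "additive (\<lambda>x. nabla1 x - nabla2 x)"
    and "nabla1 (rE x a) - nabla2 (rE x a) = rT (nabla1 x - nabla2 x) a"
    and "\<sigma> (nabla1 x - nabla2 x) = nabla1 x - nabla2 x"
proof -
  show "additive (\<lambda>x. nabla1 x - nabla2 x)"
    using assms(1,3) by (simp add: additive_def is_connection_def addhom_def algebra_simps)
  show "nabla1 (rE x a) - nabla2 (rE x a) = rT (nabla1 x - nabla2 x) a"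
    using assms(1,3) by (simp add: is_connection_def T.rscale_diff)
  show "\<sigma> (nabla1 x - nabla2 x) = nabla1 x - nabla2 x"
    using assms(2,4)
    by (intro sigma_ker_W) (simp add: torsionless_def W_diff eq_neg_iff_add_eq_0[symmetric])
qed

lemma connection_unique:
  assumes conn1: "is_connection \<iota> rE rT d0 tEE nabla1" "torsionless tEE wedge d1 nabla1"
      "compatible_Z lE rE d0 tEE tES \<sigma> g nabla1"
    and conn2: "is_connection \<iota> rE rT d0 tEE nabla2" "torsionless tEE wedge d1 nabla2"
      "compatible_Z lE rE d0 tEE tES \<sigma> g nabla2"
  shows "nabla1 = nabla2"
proof -
  define \<delta> where "\<delta> x = nabla1 x - nabla2 x" for x
  note \<delta>_add = torsionless_connection_diff(1)[OF conn1(1,2) conn2(1,2), folded \<delta>_def]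
  note \<delta>_rscale = torsionless_connection_diff(2)[OF conn1(1,2) conn2(1,2), folded \<delta>_def]
  note \<delta>_sym = torsionless_connection_diff(3)[OF conn1(1,2) conn2(1,2), folded \<delta>_def]
  define s where "s \<omega> \<eta> \<zeta> = g (tEE (rcontr (\<delta> \<omega>) \<eta>) \<zeta>)" for \<omega> \<eta> \<zeta>
  have antisym: "s \<omega> \<eta> \<zeta> = - s \<eta> \<omega> \<zeta>" if "\<omega> \<in> Z" "\<eta> \<in> Z" for \<omega> \<eta> \<zeta>
  proof -
    have "twisted_contr (\<delta> \<omega>) \<eta> + contr \<omega> (\<delta> \<eta>) = 0"
      using conn1(3) conn2(3) that
      by (simp add: compatible_Z_iff \<delta>_def twisted_contr_diff contr_diff algebra_simps)
    then have "rcontr (\<delta> \<omega>) \<eta> + rcontr (\<delta> \<eta>) \<omega> = 0"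
      using that by (simp add: twisted_contr_sigma_fixed contr_sigma_fixed \<delta>_sym)
    then have "s \<omega> \<eta> \<zeta> + s \<eta> \<omega> \<zeta> = 0"
      by (simp add: s_def flip: g_add tEE_add_left)
    then show ?thesis
      by (simp add: eq_neg_iff_add_eq_0)
  qed
  have sym: "s \<omega> \<eta> \<zeta> = s \<omega> \<zeta> \<eta>" if "\<eta> \<in> Z" "\<zeta> \<in> Z" for \<omega> \<eta> \<zeta>
    using g_rcontr_sigma[OF that, of "\<delta> \<omega>"] by (simp add: s_def \<delta>_sym)
  have "\<delta> \<omega> = 0" if \<omega>: "\<omega> \<in> Z" for \<omega>
  proof (rule rcontr_central_eq)
    fix \<eta>
    assume \<eta>: "\<eta> \<in> Z"
    show "rcontr (\<delta> \<omega>) \<eta> = rcontr 0 \<eta>"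
      by (rule g_tEE_central_inj)
        (use antisym_sym_vanish[of Z s, OF antisym sym double_eq_zero \<omega> \<eta>] in \<open>simp add: s_def\<close>)
  qed
  then have "\<delta> x = 0" for x
    using E_additive_eq[OF \<delta>_add, of "\<lambda>_. 0"] by (simp add: additive_def \<delta>_rscale frame_central)
  then show ?thesis
    by (simp add: \<delta>_def fun_eq_iff)
qed

theorem ex1_levi_civita_conn:
  "\<exists>!nabla. is_connection \<iota> rE rT d0 tEE nabla \<and> torsionless tEE wedge d1 nabla
     \<and> compatible_Z lE rE d0 tEE tES \<sigma> g nabla"
  using is_connection_levi_civita_conn torsionless_levi_civita_conn compatible_levi_civita_conn
    connection_unique by blast

end

theorem theorem6p1:
  fixes \<iota> :: "complex \<Rightarrow> 'a::ring_1"
    and lE :: "'a \<Rightarrow> 'e::ab_group_add \<Rightarrow> 'e" and rE :: "'e \<Rightarrow> 'a \<Rightarrow> 'e"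
    and lF :: "'a \<Rightarrow> 'f::ab_group_add \<Rightarrow> 'f" and rF :: "'f \<Rightarrow> 'a \<Rightarrow> 'f"
    and d0 :: "'a \<Rightarrow> 'e" and d1 :: "'e \<Rightarrow> 'f" and wedge :: "'e \<Rightarrow> 'e \<Rightarrow> 'f"
    and tEE :: "'e \<Rightarrow> 'e \<Rightarrow> 't::ab_group_add" and lT :: "'a \<Rightarrow> 't \<Rightarrow> 't" and rT :: "'t \<Rightarrow> 'a \<Rightarrow> 't"
    and tES :: "'e \<Rightarrow> 't \<Rightarrow> 's::ab_group_add"
    and Fs :: "'t set"
    and g :: "'t \<Rightarrow> 'a"
  assumes alg: "complex_algebra \<iota>"
    and bimod_E: "bimodule \<iota> lE rE"
    and bimod_F: "bimodule \<iota> lF rF"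
    and fgp: "fg_projective_right rE"
    \<comment> \<open>d on degree 0 and 1, complex linear, Leibniz rules, d^2 = 0\<close>
    and d0_add: "addhom d0"
    and d0_C: "\<forall>c a. d0 (\<iota> c * a) = lE (\<iota> c) (d0 a)"
    and d0_leib: "\<forall>a b. d0 (a * b) = rE (d0 a) b + lE a (d0 b)"
    and d1_add: "addhom d1"
    and d1_C: "\<forall>c \<omega>. d1 (lE (\<iota> c) \<omega>) = lF (\<iota> c) (d1 \<omega>)"
    and d1_leib_l: "\<forall>a \<omega>. d1 (lE a \<omega>) = wedge (d0 a) \<omega> + lF a (d1 \<omega>)"
    and d1_leib_r: "\<forall>\<omega> a. d1 (rE \<omega> a) = rF (d1 \<omega>) a - wedge \<omega> (d0 a)"
    and dd: "\<forall>a. d1 (d0 a) = 0"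
    \<comment> \<open>the product Omega^1 x Omega^1 -> Omega^2 is an A-bimodule product\<close>
    and wedge_addl: "\<forall>x x' y. wedge (x + x') y = wedge x y + wedge x' y"
    and wedge_addr: "\<forall>x y y'. wedge x (y + y') = wedge x y + wedge x y'"
    and wedge_l: "\<forall>a x y. wedge (lE a x) y = lF a (wedge x y)"
    and wedge_m: "\<forall>x a y. wedge (rE x a) y = wedge x (lE a y)"
    and wedge_r: "\<forall>x y a. wedge x (rE y a) = rF (wedge x y) a"
    \<comment> \<open>Omega^1, Omega^2 are right spans of da and da0 \<and> da1\<close>
    and gen1: "\<forall>\<omega>. \<exists>xs :: ('a \<times> 'a) list. \<omega> = sum_list (map (\<lambda>(a, b). rE (d0 a) b) xs)"
    and gen2: "\<forall>\<theta>. \<exists>xs :: ('a \<times> 'a \<times> 'a) list.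
                  \<theta> = sum_list (map (\<lambda>(a, b, c). rF (wedge (d0 a) (d0 b)) c) xs)"
    \<comment> \<open>E \<otimes>_A E and E \<otimes>_A (E \<otimes>_A E)\<close>
    and tens_EE: "is_tensor UNIV UNIV UNIV rE lE tEE"
    and bimod_T: "bimodule \<iota> lT rT"
    and lT_def: "\<forall>a x y. lT a (tEE x y) = tEE (lE a x) y"
    and rT_def: "\<forall>x y a. rT (tEE x y) a = tEE x (rE y a)"
    and tens_ES: "is_tensor UNIV UNIV UNIV rE lT tES"
    \<comment> \<open>(1): E = Z(E) \<otimes>_Z(A) A via the multiplication map\<close>
    and cond1: "is_tensor (bcenter lE rE) UNIV acenter rE (*) rE"
    \<comment> \<open>(2): E \<otimes>_A E = ker(wedge) \<oplus> F, F a right submodule, wedge restricted to F bijective\<close>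
    and F_zero: "0 \<in> Fs"
    and F_add: "\<forall>x\<in>Fs. \<forall>y\<in>Fs. x + y \<in> Fs"
    and F_uminus: "\<forall>x\<in>Fs. - x \<in> Fs"
    and F_right: "\<forall>x\<in>Fs. \<forall>a. rT x a \<in> Fs"
    and F_span: "\<forall>\<tau>. \<exists>k f. wedgeT tEE wedge k = 0 \<and> f \<in> Fs \<and> \<tau> = k + f"
    and F_inter: "\<forall>\<tau>\<in>Fs. wedgeT tEE wedge \<tau> = 0 \<longrightarrow> \<tau> = 0"
    and Q_iso: "bij_betw (wedgeT tEE wedge) Fs UNIV"
    \<comment> \<open>(3): sigma flips central elements\<close>
    and cond3: "\<forall>\<omega>\<in>bcenter lE rE. \<forall>\<eta>\<in>bcenter lE rE. sigma tEE wedge Fs (tEE \<omega> \<eta>) = tEE \<eta> \<omega>"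
    \<comment> \<open>g is a pseudo-Riemannian bilinear metric\<close>
    and g_add: "addhom g"
    and g_l: "\<forall>a \<tau>. g (lT a \<tau>) = a * g \<tau>"
    and g_r: "\<forall>\<tau> a. g (rT \<tau> a) = g \<tau> * a"
    and g_sym: "\<forall>\<tau>. g (sigma tEE wedge Fs \<tau>) = g \<tau>"
    and g_nondeg: "bij_betw (\<lambda>e x. g (tEE e x)) UNIV (right_dual rE)"
  shows "\<exists>!nabla. is_connection \<iota> rE rT d0 tEE nabla \<and> torsionless tEE wedge d1 nabla \<and>
           compatible_Z lE rE d0 tEE tES (sigma tEE wedge Fs) g nabla"
proof -
  interpret levi_civita \<iota> lE rE rF d0 d1 wedge tEE lT rT tES Fs g
    by unfold_locales (use assms in \<open>auto simp: addhom_def bimodule_def\<close>)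
  obtain J :: "(nat \<times> 'e \<times> 'a) set" and \<xi> \<xi>' \<psi>
    where "levi_civita_frame \<iota> lE rE rF d0 d1 wedge tEE lT rT tES Fs g J \<xi> \<xi>' \<psi>"
    by (rule levi_civita_frame_exists)
  then interpret levi_civita_frame \<iota> lE rE rF d0 d1 wedge tEE lT rT tES Fs g J \<xi> \<xi>' \<psi> .
  show ?thesis
    by (rule ex1_levi_civita_conn)
qed

end
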